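(* Let $n\ge 1$ and $\Omega_n=\{E\in\mathbb C:\operatorname{Re}(E)<nm+\mu_P\}$. For every $E\in\Omega_n$ the operators $\tilde K(E)$ and $\tilde U(E)$ are bounded on $\mathcal F^{(n)}$. Moreover there is a constant $C>0$, independent of $E$, $n$ and $\lambda$, such that $$\|\tilde U(E)\|\le \frac{C\,\lambda^2 n}{(n-1)m+\mu_P-\operatorname{Re}(E)}$$ for all $E$ with $\operatorname{Re}(E)<(n-1)m+\mu_P$, and both $\|\tilde K(E)\|\to 0$ and $\|\tilde U(E)\|\to0$ as $E\to-\infty$ along the real axis.
   Context: Light-front Lee model in 2+1 dimensions. Fix $m>0$, a coupling constant $\lambda>0$ and a physical binding energy $\mu_P$ with $0<\mu_P<m$. Let $\mathfrak h=L^2\big((0,\infty)\times\mathbb R,\tfrac{dp\,dp_\perp}{(2\pi)^2}\big)$, let $\mathcal F^{(n)}$ denote the $n$-boson (symmetric) subspace of the bosonic Fock space over $\mathfrak h$, and let $a(p,p_\perp),a^\dagger(p,p_\perp)$ be the annihilation/creation operator-valued distributions with $[a(p,p_\perp),a^\dagger(q,q_\perp)]=(2\pi)^2\delta(p-q)\delta(p_\perp-q_\perp)$. Put $\omega(p,p_\perp)=\frac{m^2+p^2+p_\perp^2}{2p}$ (note $\omega\ge m$), and $H_0=\int_0^\infty\!\!\int_{\mathbb R}\frac{dp\,dp_\perp}{(2\pi)^2}\,\omega(p,p_\perp)a^\dagger(p,p_\perp)a(p,p_\perp)$, the free (second quantized) Hamiltonian, self-adjoint on its domain $D(H_0)$;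 on $\mathcal F^{(n)}$ one has $H_0\ge nm$. For complex $E$ define, on $\mathcal F^{(n)}$, $$\tilde K(E)=\lambda^2\int_0^\infty\!\!\int_{\mathbb R}\frac{dp\,dp_\perp}{(2\pi)^2}\,\frac{1}{2p}\,\frac{1}{(\omega(p,p_\perp)-\mu_P)\,(H_0-E+\omega(p,p_\perp))}$$ (a function of $H_0$ via the spectral calculus), $$V(E)=\lambda^2\int\!\!\int\frac{dp\,dp_\perp}{(2\pi)^2}\frac{dq\,dq_\perp}{(2\pi)^2}\,\frac{1}{2\sqrt{pq}}\,a^\dagger(q,q_\perp)\,\big(H_0-E+\omega(p,p_\perp)+\omega(q,q_\perp)\big)^{-1}a(p,p_\perp),$$ and $\tilde U(E)=V(E)\,(H_0-E+\mu_P)^{-1}$. The (renormalized) principal operator is $\Phi(E)=(H_0-E+\mu_P)\big[1+\tilde K(E)\big]-V(E)=\big[1+\tilde K(E)-\tilde U(E)\big](H_0-E+\mu_P)$, acting in $\mathcal F^{(n)}$. *)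

theory Defs
  imports "HOL-Probability.Probability"
begin

text \<open>Light-front Lee model in 2+1 dimensions, n-boson sector realised concretely:
  one-boson momenta are points (p, p_perp) of real x real with p > 0, measure
  dp dp_perp / (2 pi)^2; the n-boson sector consists of symmetric square-integrable
  complex functions of n momenta (indexed by {..<n}).\<close>

definition omega :: "real \<Rightarrow> real \<times> real \<Rightarrow> real" where
  "omega m p = (m^2 + (fst p)^2 + (snd p)^2) / (2 * fst p)"

definition mom_measure :: "(real \<times> real) measure" where
  "mom_measure = density lborel
     (\<lambda>p. ennreal (indicator {q. 0 < fst q} p / (2 * pi)^2))"

definition fock_measure :: "nat \<Rightarrow> (nat \<Rightarrow> real \<times> real) measure" where
  "fock_measure n = PiM {..<n} (\<lambda>_. mom_measure)"

definition Hn :: "real \<Rightarrow> nat \<Rightarrow> (nat \<Rightarrow> real \<times> real) \<Rightarrow> real" where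
  "Hn m n k = (\<Sum>i<n. omega m (k i))"

definition symmetric_fn :: "nat \<Rightarrow> ((nat \<Rightarrow> real \<times> real) \<Rightarrow> complex) \<Rightarrow> bool" where
  "symmetric_fn n \<psi> \<longleftrightarrow>
     (\<forall>\<pi>. \<pi> permutes {..<n} \<longrightarrow> (\<forall>k \<in> space (fock_measure n). \<psi> (k \<circ> \<pi>) = \<psi> k))"

definition l2norm :: "nat \<Rightarrow> ((nat \<Rightarrow> real \<times> real) \<Rightarrow> complex) \<Rightarrow> real" where
  "l2norm n \<psi> = sqrt (\<integral>k. (cmod (\<psi> k))^2 \<partial>fock_measure n)"

text \<open>The n-boson sector F^(n) (representatives of its elements).\<close>
definition fock_sector :: "nat \<Rightarrow> ((nat \<Rightarrow> real \<times> real) \<Rightarrow> complex) set" where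
  "fock_sector n = {\<psi>. \<psi> \<in> borel_measurable (fock_measure n)
       \<and> integrable (fock_measure n) (\<lambda>k. (cmod (\<psi> k))^2)
       \<and> symmetric_fn n \<psi>}"

definition bounded_op ::
  "nat \<Rightarrow> (((nat \<Rightarrow> real \<times> real) \<Rightarrow> complex) \<Rightarrow> ((nat \<Rightarrow> real \<times> real) \<Rightarrow> complex)) \<Rightarrow> bool" where
  "bounded_op n T \<longleftrightarrow> (\<exists>c. \<forall>\<psi> \<in> fock_sector n.
       T \<psi> \<in> fock_sector n \<and> l2norm n (T \<psi>) \<le> c * l2norm n \<psi>)"

definition op_norm ::
  "nat \<Rightarrow> (((nat \<Rightarrow> real \<times> real) \<Rightarrow> complex) \<Rightarrow> ((nat \<Rightarrow> real \<times> real) \<Rightarrow> complex)) \<Rightarrow> real" where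
  "op_norm n T = Sup {l2norm n (T \<psi>) | \<psi>. \<psi> \<in> fock_sector n \<and> l2norm n \<psi> \<le> 1}"

definition K_integrand ::
  "real \<Rightarrow> real \<Rightarrow> complex \<Rightarrow> nat \<Rightarrow> (nat \<Rightarrow> real \<times> real) \<Rightarrow> real \<times> real \<Rightarrow> complex" where
  "K_integrand m \<mu>P E n k p =
     complex_of_real (1 / (2 * fst p)) /
       (complex_of_real (omega m p - \<mu>P) * (complex_of_real (Hn m n k + omega m p) - E))"

definition Ktilde ::
  "real \<Rightarrow> real \<Rightarrow> real \<Rightarrow> complex \<Rightarrow> nat \<Rightarrow>
     ((nat \<Rightarrow> real \<times> real) \<Rightarrow> complex) \<Rightarrow> ((nat \<Rightarrow> real \<times> real) \<Rightarrow> complex)" where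
  "Ktilde m \<mu>P lam E n \<psi> k =
     complex_of_real (lam^2) * (\<integral>p. K_integrand m \<mu>P E n k p \<partial>mom_measure) * \<psi> k"

text \<open>U~(E) = V(E) (H_0 - E + mu_P)^{-1}.  On a symmetric n-boson wave function,
  (V(E) phi)(k) = lam^2 sum_j int dp/(2pi)^2 (2 sqrt(p k_j))^{-1}
      (H_0(k with k_j replaced by p) + omega(k_j) - E)^{-1} phi(k with k_j replaced by p),
  and phi = psi / (H_0 - E + mu_P).\<close>
definition U_integrand ::
  "real \<Rightarrow> real \<Rightarrow> complex \<Rightarrow> nat \<Rightarrow> ((nat \<Rightarrow> real \<times> real) \<Rightarrow> complex) \<Rightarrow>
     (nat \<Rightarrow> real \<times> real) \<Rightarrow> nat \<Rightarrow> real \<times> real \<Rightarrow> complex" where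
  "U_integrand m \<mu>P E n \<psi> k j p =
     complex_of_real (1 / (2 * sqrt (fst p * fst (k j)))) /
       (complex_of_real (Hn m n (k(j := p)) + omega m (k j)) - E)
     * (\<psi> (k(j := p)) / (complex_of_real (Hn m n (k(j := p)) + \<mu>P) - E))"

definition Utilde ::
  "real \<Rightarrow> real \<Rightarrow> real \<Rightarrow> complex \<Rightarrow> nat \<Rightarrow>
     ((nat \<Rightarrow> real \<times> real) \<Rightarrow> complex) \<Rightarrow> ((nat \<Rightarrow> real \<times> real) \<Rightarrow> complex)" where
  "Utilde m \<mu>P lam E n \<psi> k =
     complex_of_real (lam^2) * (\<Sum>j<n. \<integral>p. U_integrand m \<mu>P E n \<psi> k j p \<partial>mom_measure)"

end

theory Submission
  imports Defs "HOL-Real_Asymp.Real_Asymp"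
begin

text \<open>Everything reduces to one explicit one-boson integral,
  \<open>\<integral> dp dp\<^sub>\<perp> / (2\<pi>)\<^sup>2 \<cdot> 1 / (2p (\<omega>(p) + d)\<^sup>2) \<le> 1 / (d + m)\<close> for \<open>d \<ge> 0\<close>,
  obtained by integrating out \<open>p\<^sub>\<perp>\<close> and then \<open>p\<close> in closed form.
  On the n-boson sector \<open>H\<^sub>0 \<ge> n m\<close>, and after replacing one momentum by \<open>p\<close> still
  \<open>H\<^sub>0 \<ge> (n - 1) m + \<omega>(p)\<close>; so below the threshold every resolvent denominator is bounded
  below by a multiple of \<open>\<omega> + d\<close>, where \<open>d\<close> measures the distance of \<open>Re E\<close> to the
  threshold. \<open>K~(E)\<close> multiplies by a function of \<open>H\<^sub>0\<close>, which this integral bounds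
  uniformly. For \<open>U~(E)\<close>, Cauchy-Schwarz in the integration variable (a Schur test) splits the
  kernel of each of its n terms into two such factors, one in the annihilated and one in the
  created momentum. This gives \<open>\<parallel>U~(E)\<parallel> \<le> \<lambda>\<^sup>2 n / ((n - 1) m + \<mu>\<^sub>P - Re E)\<close>, i.e. \<open>C = 1\<close>, and
  both bounds visibly vanish as \<open>E \<rightarrow> -\<infinity>\<close>.\<close>

section \<open>Two elementary integrals on the line\<close>

lemma nn_integral_einterval_FTC:
  fixes f F :: "real \<Rightarrow> real" and a b :: ereal
  assumes "a < b"
    and F: "\<And>x. a < ereal x \<Longrightarrow> ereal x < b \<Longrightarrow> DERIV F x :> f x"
    and f: "\<And>x. a < ereal x \<Longrightarrow> ereal x < b \<Longrightarrow> isCont f x"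
    and f_nonneg: "\<And>x. a < ereal x \<Longrightarrow> ereal x < b \<Longrightarrow> 0 \<le> f x"
    and A: "((F \<circ> real_of_ereal) \<longlongrightarrow> A) (at_right a)"
    and B: "((F \<circ> real_of_ereal) \<longlongrightarrow> B) (at_left b)"
  shows "(\<integral>\<^sup>+x. ennreal (indicator (einterval a b) x * f x) \<partial>lborel) = ennreal (B - A)"
proof -
  have "AE x in lborel. a < ereal x \<longrightarrow> ereal x < b \<longrightarrow> 0 \<le> f x"
    using f_nonneg by auto
  note FTC = interval_integral_FTC_nonneg[OF \<open>a < b\<close> F f this A B]
  have int: "integrable lborel (\<lambda>x. indicator (einterval a b) x * f x)"
    using FTC(1) by (simp add: set_integrable_def)
  have "(\<integral>\<^sup>+x. ennreal (indicator (einterval a b) x * f x) \<partial>lborel)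
      = ennreal (\<integral>x. indicator (einterval a b) x * f x \<partial>lborel)"
    by (rule nn_integral_eq_integral[OF int])
      (auto simp: indicator_def einterval_iff intro!: f_nonneg)
  also have "(\<integral>x. indicator (einterval a b) x * f x \<partial>lborel) = B - A"
    using FTC(2) less_imp_le[OF \<open>a < b\<close>]
    by (simp add: interval_lebesgue_integral_def set_lebesgue_integral_def)
  finally show ?thesis .
qed

text \<open>The integrand is dominated by \<open>1 / (\<surd>B (B + y\<^sup>2)\<^sup>3\<^sup>/\<^sup>2)\<close>, which has the
  elementary primitive \<open>y / (B \<surd>B \<surd>(B + y\<^sup>2))\<close>.\<close>

lemma nn_integral_inverse_square_quadratic_le:
  fixes B :: real
  assumes B: "0 < B"
  shows "(\<integral>\<^sup>+y. ennreal (1 / (B + y^2)^2) \<partial>lborel) \<le> ennreal (2 / (B * sqrt B))"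
proof -
  define h where "h y = 1 / (sqrt B * ((B + y^2) * sqrt (B + y^2)))" for y
  define F where "F y = y / (B * sqrt B * sqrt (B + y^2))" for y
  have pos: "0 < B + y^2" for y
    using B by (simp add: add_pos_nonneg)
  have le: "1 / (B + y^2)^2 \<le> h y" for y
  proof -
    have "sqrt B * sqrt (B + y^2) \<le> sqrt (B + y^2) * sqrt (B + y^2)"
      using pos[of y] by (intro mult_right_mono) auto
    also have "\<dots> = B + y^2"
      using pos[of y] by simp
    finally have "sqrt B * ((B + y^2) * sqrt (B + y^2)) \<le> (B + y^2) * (B + y^2)"
      using pos[of y] by (simp add: mult.left_commute mult_left_mono)
    moreover have "0 < sqrt B * ((B + y^2) * sqrt (B + y^2))"
      using pos[of y] B by simp
    ultimately show ?thesis
      unfolding h_def power2_eq_square[of "B + y^2"] by (intro divide_left_mono) auto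
  qed
  have deriv: "DERIV F y :> h y" for y
  proof -
    define s where "s = sqrt (B + y^2)"
    have s: "0 < s" "s * s = B + y^2"
      unfolding s_def using pos[of y] by auto
    have r: "0 < sqrt B" "sqrt B * sqrt B = B"
      using B by auto
    have "DERIV F y :> (B * sqrt B * s - y * (inverse s * y * (B * sqrt B))) / (B * sqrt B * s * (B * sqrt B * s))"
      unfolding F_def s_def using pos[of y] B by (auto intro!: derivative_eq_intros)
    moreover have "(B * sqrt B * s - y * (inverse s * y * (B * sqrt B))) / (B * sqrt B * s * (B * sqrt B * s))
        = h y"
    proof -
      have "B * sqrt B * s - y * (inverse s * y * (B * sqrt B)) = B * sqrt B * (s * s - y^2) / s"
        using s(1) by (simp add: field_simps power2_eq_square)
      also have "\<dots> = B * sqrt B * B / s"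
        using s by simp
      also have "\<dots> / (B * sqrt B * s * (B * sqrt B * s)) = 1 / (sqrt B * ((s * s) * s))"
        using s(1) r B by (simp add: field_simps)
      finally show ?thesis
        unfolding h_def s_def[symmetric] s(2) .
    qed
    ultimately show ?thesis
      by simp
  qed
  have "(\<integral>\<^sup>+y. ennreal (indicator (einterval (-\<infinity>) \<infinity>) y * h y) \<partial>lborel)
      = ennreal (1 / (B * sqrt B) - (-1 / (B * sqrt B)))"
  proof (rule nn_integral_einterval_FTC)
    show "DERIV F y :> h y" for y
      by (rule deriv)
    show "isCont h y" for y
      unfolding h_def using pos[of y] B by (auto intro!: continuous_intros)
    show "0 \<le> h y" for y
      unfolding h_def using pos[of y] B by auto
    show "((F \<circ> real_of_ereal) \<longlongrightarrow> -1 / (B * sqrt B)) (at_right (-\<infinity>))"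
      unfolding ereal_tendsto_simps1 F_def using B by (real_asymp simp: sqrt_def field_simps)
    show "((F \<circ> real_of_ereal) \<longlongrightarrow> 1 / (B * sqrt B)) (at_left \<infinity>)"
      unfolding ereal_tendsto_simps1 F_def using B by (real_asymp simp: sqrt_def field_simps)
  qed simp
  moreover have "(\<integral>\<^sup>+y. ennreal (1 / (B + y^2)^2) \<partial>lborel)
      \<le> (\<integral>\<^sup>+y. ennreal (indicator (einterval (-\<infinity>) \<infinity>) y * h y) \<partial>lborel)"
    by (intro nn_integral_mono) (simp add: le ennreal_leI)
  ultimately show ?thesis
    by simp
qed

lemma nn_integral_inverse_sqrt_shifted_cube:
  fixes a :: real
  assumes a: "0 < a"
  shows "(\<integral>\<^sup>+x. ennreal (indicator {0<..} x * (1 / (sqrt x * ((x + a) * sqrt (x + a))))) \<partial>lborel)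
    = ennreal (2 / a)"
proof -
  define h where "h x = 1 / (sqrt x * ((x + a) * sqrt (x + a)))" for x
  define F where "F x = 2 * sqrt x / (a * sqrt (x + a))" for x
  have deriv: "DERIV F x :> h x" if x: "0 < x" for x
  proof -
    define u where "u = sqrt x"
    define v where "v = sqrt (x + a)"
    have uv: "0 < u" "0 < v" "u * u = x" "v * v = x + a"
      unfolding u_def v_def using x a by auto
    have "DERIV F x :> (inverse u * (a * v) - u * (inverse v * a)) / (a * v * (a * v))"
      unfolding F_def u_def v_def using x a by (auto intro!: derivative_eq_intros)
    moreover have "(inverse u * (a * v) - u * (inverse v * a)) / (a * v * (a * v)) = h x"
    proof -
      have "inverse u * (a * v) - u * (inverse v * a) = a * (v * v - u * u) / (u * v)"
        using uv(1,2) by (simp add: field_simps)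
      also have "\<dots> = a * a / (u * v)"
        using uv by simp
      also have "\<dots> / (a * v * (a * v)) = 1 / (u * ((v * v) * v))"
        using uv(1,2) a by (simp add: field_simps)
      finally show ?thesis
        unfolding h_def u_def[symmetric] v_def[symmetric] uv(4) .
    qed
    ultimately show ?thesis
      by simp
  qed
  have "(\<integral>\<^sup>+x. ennreal (indicator (einterval 0 \<infinity>) x * h x) \<partial>lborel) = ennreal (2 / a - 0)"
  proof (rule nn_integral_einterval_FTC)
    show "0 < ereal x \<Longrightarrow> DERIV F x :> h x" for x
      using deriv by (simp add: zero_ereal_def)
    show "0 < ereal x \<Longrightarrow> isCont h x" for x
      unfolding h_def using a by (auto intro!: continuous_intros simp: zero_ereal_def)
    show "0 < ereal x \<Longrightarrow> 0 \<le> h x" for x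
      unfolding h_def using a by (auto simp: zero_ereal_def)
    show "((F \<circ> real_of_ereal) \<longlongrightarrow> 0) (at_right 0)"
      unfolding zero_ereal_def ereal_tendsto_simps1 F_def using a by real_asymp
    show "((F \<circ> real_of_ereal) \<longlongrightarrow> 2 / a) (at_left \<infinity>)"
      unfolding ereal_tendsto_simps1 F_def using a by (real_asymp simp: field_simps)
  qed simp
  moreover have "einterval 0 \<infinity> = {0<..}"
    by (auto simp: einterval_iff zero_ereal_def)
  ultimately show ?thesis
    unfolding h_def by simp
qed

lemma sets_mom_measure [simp, measurable_cong]: "sets mom_measure = sets (borel \<Otimes>\<^sub>M borel)"
  by (simp only: mom_measure_def sets_density sets_lborel borel_prod)

lemma space_mom_measure [simp]: "space mom_measure = UNIV"
  unfolding mom_measure_def by simp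

lemma borel_measurable_pair_borel:
  "f \<in> borel_measurable (borel \<Otimes>\<^sub>M borel) \<Longrightarrow> f \<in> borel_measurable (borel :: (real \<times> real) measure)"
  by (simp only: borel_prod)

lemma mom_density_measurable [measurable]:
  "(\<lambda>p::real \<times> real. indicator {q. 0 < fst q} p / c :: real) \<in> borel_measurable borel"
  "(\<lambda>p::real \<times> real. of_bool (0 < fst p) / c :: real) \<in> borel_measurable borel"
  by (intro borel_measurable_pair_borel; measurable)+

interpretation mom_measure: sigma_finite_measure mom_measure
  unfolding mom_measure_def
  by (rule sigma_finite_measure.sigma_finite_iff_density_finite'[OF sigma_finite_lborel, THEN iffD2])
    auto

interpretation fock: product_sigma_finite "\<lambda>_. mom_measure"
  by unfold_locales

lemma nn_integral_mom_measure:
  assumes "f \<in> borel_measurable borel"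
  shows "(\<integral>\<^sup>+p. f p \<partial>mom_measure)
    = (\<integral>\<^sup>+p. ennreal (indicator {q. 0 < fst q} p / (2 * pi)^2) * f p \<partial>lborel)"
  unfolding mom_measure_def using assms by (subst nn_integral_density) auto

lemma AE_mom_measure_fst_pos: "AE p in mom_measure. 0 < fst p"
  unfolding mom_measure_def by (subst AE_density) (auto simp: indicator_def)

lemma omega_measurable [measurable]: "omega m \<in> borel_measurable mom_measure"
  unfolding omega_def by measurable

lemma fst_measurable_mom [measurable]: "(\<lambda>p. fst p :: real) \<in> borel_measurable mom_measure"
  by measurable

lemma omega_ge_mass:
  assumes "0 < m" "0 < fst p"
  shows "m \<le> omega m p"
proof -
  have "m^2 + (fst p)^2 + (snd p)^2 - 2 * fst p * m = (fst p - m)^2 + (snd p)^2"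
    by (simp add: power2_eq_square algebra_simps)
  then have "2 * fst p * m \<le> m^2 + (fst p)^2 + (snd p)^2"
    by (smt (verit) zero_le_power2)
  then show ?thesis
    using assms unfolding omega_def by (simp add: field_simps)
qed

section \<open>The basic one-boson integral\<close>

definition resolvent_weight :: "real \<Rightarrow> real \<Rightarrow> real \<times> real \<Rightarrow> real" where
  "resolvent_weight m d p = 1 / (2 * fst p * (omega m p + d)^2)"

lemma resolvent_weight_measurable [measurable]:
  "resolvent_weight m d \<in> borel_measurable mom_measure"
  unfolding resolvent_weight_def by measurable

lemma resolvent_weight_Pair:
  assumes "0 < x" "0 \<le> d"
  shows "resolvent_weight m d (x, y) = 2 * x / ((m^2 + x^2 + 2 * x * d) + y^2)^2"
proof -
  define N where "N = (m^2 + x^2 + 2 * x * d) + y^2"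
  have "0 < N"
    unfolding N_def using assms by (smt (verit) zero_le_power2 zero_less_power mult_nonneg_nonneg)
  moreover have "omega m (x, y) + d = N / (2 * x)"
    unfolding omega_def N_def using assms by (simp add: field_simps)
  moreover have "1 / (2 * x * (N / (2 * x))^2) = 2 * x / N^2"
    using assms \<open>0 < N\<close> by (simp add: power_divide field_simps power2_eq_square)
  ultimately show ?thesis
    unfolding resolvent_weight_def N_def[symmetric] by simp
qed

text \<open>After the \<open>p\<^sub>\<perp>\<close>-integration the weight decays like \<open>x / B\<^sup>3\<^sup>/\<^sup>2\<close>; the lower bound
  \<open>B \<ge> x (x + a) / 2\<close> turns this into the integrand \<open>1 / (\<surd>x (x + a)\<^sup>3\<^sup>/\<^sup>2)\<close> integrated
  exactly above.\<close>

lemma transverse_decay_le: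
  assumes m: "0 < m" and x: "0 < x" and d: "0 \<le> d"
  defines "B \<equiv> m^2 + x^2 + 2 * x * d" and "a \<equiv> 4 * d + 2 * m"
  shows "x / (B * sqrt B) \<le> 2 * sqrt 2 * (1 / (sqrt x * ((x + a) * sqrt (x + a))))"
proof -
  define X where "X = x * (x + a) / 2"
  have a: "0 < a"
    using m d unfolding a_def by simp
  have X: "0 < X"
    using x a unfolding X_def by simp
  have "B - X = (x - m)^2 / 2 + m^2 / 2"
    unfolding B_def X_def a_def by (simp add: power2_eq_square field_simps)
  then have XB: "X \<le> B"
    by (smt (verit) zero_le_power2 divide_nonneg_nonneg)
  then have "X * sqrt X \<le> B * sqrt B"
    using X by (intro mult_mono) auto
  then have "x / (B * sqrt B) \<le> x / (X * sqrt X)"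
    using X x XB by (intro divide_left_mono) auto
  also have "X * sqrt X = x * ((x + a) * (sqrt x * sqrt (x + a))) / (2 * sqrt 2)"
  proof -
    have "sqrt X = sqrt x * sqrt (x + a) / sqrt 2"
      unfolding X_def using x a by (simp add: real_sqrt_mult real_sqrt_divide)
    then show ?thesis
      unfolding X_def by (simp add: field_simps)
  qed
  also have "x / (x * ((x + a) * (sqrt x * sqrt (x + a))) / (2 * sqrt 2))
      = 2 * sqrt 2 * (1 / (sqrt x * ((x + a) * sqrt (x + a))))"
  proof -
    have "x / (x * Y / (2 * sqrt 2)) = 2 * sqrt 2 / Y" if "0 < Y" for Y :: real
      using that x by (simp add: field_simps)
    moreover have "0 < (x + a) * (sqrt x * sqrt (x + a))"
      using x a by simp
    ultimately show ?thesis
      by (simp add: ac_simps)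
  qed
  finally show ?thesis .
qed

lemma nn_integral_transverse_resolvent_weight_le:
  assumes m: "0 < m" and x: "0 < x" and d: "0 \<le> d"
  shows "(\<integral>\<^sup>+y. ennreal (indicator {q. 0 < fst q} (x, y) / (2 * pi)^2) * ennreal (resolvent_weight m d (x, y)) \<partial>lborel)
    \<le> ennreal (2 * sqrt 2 / pi^2) * ennreal (1 / (sqrt x * ((x + (4 * d + 2 * m)) * sqrt (x + (4 * d + 2 * m)))))"
proof -
  define B where "B = m^2 + x^2 + 2 * x * d"
  have B: "0 < B"
    unfolding B_def using x m d by (intro add_pos_nonneg) auto
  have "(\<integral>\<^sup>+y. ennreal (indicator {q. 0 < fst q} (x, y) / (2 * pi)^2) * ennreal (resolvent_weight m d (x, y)) \<partial>lborel)
      = (\<integral>\<^sup>+y. ennreal (x / (2 * pi^2)) * ennreal (1 / (B + y^2)^2) \<partial>lborel)"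
  proof (intro nn_integral_cong)
    fix y :: real
    have "resolvent_weight m d (x, y) = 2 * x / (B + y^2)^2"
      unfolding B_def using x d by (rule resolvent_weight_Pair)
    then show "ennreal (indicator {q. 0 < fst q} (x, y) / (2 * pi)^2) * ennreal (resolvent_weight m d (x, y))
        = ennreal (x / (2 * pi^2)) * ennreal (1 / (B + y^2)^2)"
      using x by (simp add: ennreal_mult[symmetric] power_mult_distrib)
  qed
  also have "\<dots> = ennreal (x / (2 * pi^2)) * (\<integral>\<^sup>+y. ennreal (1 / (B + y^2)^2) \<partial>lborel)"
    by (rule nn_integral_cmult) simp
  also have "\<dots> \<le> ennreal (x / (2 * pi^2)) * ennreal (2 / (B * sqrt B))"
    by (intro mult_left_mono nn_integral_inverse_square_quadratic_le B) simp
  also have "\<dots> = ennreal (1 / pi^2 * (x / (B * sqrt B)))"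
    using x B by (simp add: ennreal_mult[symmetric])
  also have "\<dots> \<le> ennreal (1 / pi^2 * (2 * sqrt 2 * (1 / (sqrt x * ((x + (4 * d + 2 * m)) * sqrt (x + (4 * d + 2 * m)))))))"
    using transverse_decay_le[OF m x d] unfolding B_def
    by (intro ennreal_leI mult_left_mono) auto
  also have "\<dots> = ennreal (2 * sqrt 2 / pi^2) * ennreal (1 / (sqrt x * ((x + (4 * d + 2 * m)) * sqrt (x + (4 * d + 2 * m)))))"
    using x m d by (subst ennreal_mult[symmetric]) auto
  finally show ?thesis .
qed

lemma nn_integral_resolvent_weight_le:
  assumes m: "0 < m" and d: "0 \<le> d"
  shows "(\<integral>\<^sup>+p. ennreal (resolvent_weight m d p) \<partial>mom_measure) \<le> ennreal (1 / (d + m))"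
proof -
  define a where "a = 4 * d + 2 * m"
  define c where "c = 2 * sqrt 2 / pi^2"
  define q where "q x = indicator {0<..} x * (1 / (sqrt x * ((x + a) * sqrt (x + a))))" for x
  have a: "0 < a"
    unfolding a_def using m d by simp
  have "(\<integral>\<^sup>+p. ennreal (resolvent_weight m d p) \<partial>mom_measure)
      = (\<integral>\<^sup>+p. ennreal (indicator {q. 0 < fst q} p / (2 * pi)^2) * ennreal (resolvent_weight m d p) \<partial>(lborel \<Otimes>\<^sub>M lborel))"
    by (subst nn_integral_mom_measure) (simp_all add: lborel_prod borel_measurable_pair_borel)
  also have "\<dots> = (\<integral>\<^sup>+x. \<integral>\<^sup>+y. ennreal (indicator {q. 0 < fst q} (x, y) / (2 * pi)^2)
      * ennreal (resolvent_weight m d (x, y)) \<partial>lborel \<partial>lborel)"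
    by (rule lborel.nn_integral_fst[symmetric]) (simp add: borel_measurable_pair_borel)
  also have "\<dots> \<le> (\<integral>\<^sup>+x. ennreal c * ennreal (q x) \<partial>lborel)"
  proof (intro nn_integral_mono)
    fix x :: real
    show "(\<integral>\<^sup>+y. ennreal (indicator {q. 0 < fst q} (x, y) / (2 * pi)^2) * ennreal (resolvent_weight m d (x, y)) \<partial>lborel)
        \<le> ennreal c * ennreal (q x)"
    proof (cases "0 < x")
      case True
      then show ?thesis
        using nn_integral_transverse_resolvent_weight_le[OF m True d]
        unfolding c_def q_def a_def by simp
    qed (simp add: indicator_def)
  qed
  also have "\<dots> = ennreal c * ennreal (2 / a)"
    unfolding q_def using nn_integral_inverse_sqrt_shifted_cube[OF a]
    by (subst nn_integral_cmult) simp_all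
  also have "\<dots> \<le> ennreal (1 / (d + m))"
  proof -
    have "sqrt 2 \<le> 2"
      by (rule real_le_lsqrt) auto
    moreover have "3 * 3 \<le> pi * pi"
      using pi_gt3 by (intro mult_mono) auto
    then have "9 \<le> pi^2"
      by (simp add: power2_eq_square)
    ultimately have "c \<le> 1"
      unfolding c_def by (simp add: field_simps)
    then have "c * (2 / a) \<le> 1 * (2 / a)"
      using a by (intro mult_right_mono) auto
    also have "\<dots> \<le> 1 / (d + m)"
      unfolding a_def using m d by (simp add: field_simps)
    finally have "c * (2 / a) \<le> 1 / (d + m)" .
    then show ?thesis
      unfolding c_def using a by (simp add: ennreal_mult[symmetric] ennreal_leI)
  qed
  finally show ?thesis .
qed

lemma measurable_fock_component [measurable]:
  "i \<in> {..<n} \<Longrightarrow> (\<lambda>k. k i) \<in> measurable (fock_measure n) mom_measure"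
  unfolding fock_measure_def by measurable

lemma space_fock_measure: "space (fock_measure n) = PiE {..<n} (\<lambda>_. UNIV)"
  unfolding fock_measure_def by (simp add: space_PiM)

lemma Hn_measurable [measurable]: "Hn m n \<in> borel_measurable (fock_measure n)"
  unfolding Hn_def by measurable

lemma measurable_fock_fun_upd:
  assumes "j < n"
  shows "(\<lambda>x. (fst x)(j := snd x)) \<in> measurable (fock_measure n \<Otimes>\<^sub>M mom_measure) (fock_measure n)"
proof -
  have "(\<lambda>x. (fst x)(j := snd x))
      \<in> measurable (fock_measure n \<Otimes>\<^sub>M mom_measure) (PiM ({..<n} \<union> {j}) (\<lambda>_. mom_measure))"
    by (rule measurable_fun_upd[where J="{..<n}"]) (auto simp: fock_measure_def)
  moreover have "{..<n} \<union> {j} = {..<n}"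
    using assms by auto
  ultimately show ?thesis
    unfolding fock_measure_def by (simp only:)
qed

lemma measurable_fock_fun_upd_complement:
  assumes "j < n"
  shows "(\<lambda>x. (fst x)(j := snd x))
    \<in> measurable (PiM ({..<n} - {j}) (\<lambda>_. mom_measure) \<Otimes>\<^sub>M mom_measure) (fock_measure n)"
proof -
  have "(\<lambda>(f, y). f(j := y)) \<in> measurable (PiM ({..<n} - {j}) (\<lambda>_. mom_measure) \<Otimes>\<^sub>M mom_measure)
      (PiM (insert j ({..<n} - {j})) (\<lambda>_. mom_measure))"
    by (rule measurable_add_dim)
  moreover have "insert j ({..<n} - {j}) = {..<n}"
    using assms by auto
  ultimately show ?thesis
    unfolding fock_measure_def by (simp add: case_prod_beta')
qed

lemma nn_integral_fock_measure_fun_upd: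
  assumes j: "j < n" and f: "f \<in> borel_measurable (fock_measure n)"
  shows "integral\<^sup>N (fock_measure n) f
    = (\<integral>\<^sup>+x. \<integral>\<^sup>+y. f (x(j := y)) \<partial>mom_measure \<partial>PiM ({..<n} - {j}) (\<lambda>_. mom_measure))"
proof -
  have I: "insert j ({..<n} - {j}) = {..<n}"
    using j by auto
  have "integral\<^sup>N (PiM (insert j ({..<n} - {j})) (\<lambda>_. mom_measure)) f
      = (\<integral>\<^sup>+x. \<integral>\<^sup>+y. f (x(j := y)) \<partial>mom_measure \<partial>PiM ({..<n} - {j}) (\<lambda>_. mom_measure))"
    by (rule fock.product_nn_integral_insert) (use f I in \<open>auto simp: fock_measure_def\<close>)
  then show ?thesis
    unfolding I fock_measure_def .
qed

lemma AE_fock_measure_component: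
  assumes j: "j < n" and P [measurable]: "Measurable.pred mom_measure P" and AE: "AE p in mom_measure. P p"
  shows "AE k in fock_measure n. P (k j)"
proof -
  have meas: "(\<lambda>k. indicator {p. \<not> P p} (k j) :: ennreal) \<in> borel_measurable (fock_measure n)"
    by measurable (use j in simp)
  have null: "(\<integral>\<^sup>+y. indicator {p. \<not> P p} y \<partial>mom_measure) = 0"
    using AE by (subst nn_integral_0_iff_AE) (auto simp: indicator_def elim!: eventually_mono)
  have "(\<integral>\<^sup>+k. indicator {p. \<not> P p} (k j) \<partial>fock_measure n) = 0"
    using null by (simp add: nn_integral_fock_measure_fun_upd[OF j meas])
  then have "AE k in fock_measure n. (indicator {p. \<not> P p} (k j) :: ennreal) = 0"
    using nn_integral_0_iff_AE[OF meas] by simp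
  then show ?thesis
    by (rule eventually_mono) (simp add: indicator_def split: if_splits)
qed

lemma AE_fock_measure_fst_pos: "AE k in fock_measure n. \<forall>i<n. 0 < fst (k i)"
proof -
  have "AE k in fock_measure n. \<forall>i\<in>{..<n}. 0 < fst (k i)"
    by (intro eventually_ball_finite ballI AE_fock_measure_component AE_mom_measure_fst_pos) auto
  then show ?thesis
    by (simp only: lessThan_iff Ball_def)
qed

lemma Hn_ge_mass:
  assumes m: "0 < m" and k: "\<forall>i<n. 0 < fst (k i)"
  shows "real n * m \<le> Hn m n k"
proof -
  have "(\<Sum>i<n. m) \<le> (\<Sum>i<n. omega m (k i))"
    by (intro sum_mono omega_ge_mass m) (use k in auto)
  then show ?thesis
    unfolding Hn_def by simp
qed

lemma Hn_fun_upd_ge: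
  assumes m: "0 < m" and k: "\<forall>i<n. 0 < fst (k i)" and j: "j < n" and p: "0 < fst p"
  shows "real (n - 1) * m + omega m p \<le> Hn m n (k(j := p))"
proof -
  have "(\<Sum>i<n. m + (if i = j then omega m p - m else 0)) \<le> (\<Sum>i<n. omega m ((k(j := p)) i))"
    by (intro sum_mono) (use k p m omega_ge_mass in auto)
  moreover have "(\<Sum>i<n. m + (if i = j then omega m p - m else 0)) = real (n - 1) * m + omega m p"
    using j by (simp add: sum.distrib of_nat_diff algebra_simps)
  ultimately show ?thesis
    unfolding Hn_def by simp
qed

lemma Hn_permute:
  assumes "\<pi> permutes {..<n}"
  shows "Hn m n (k \<circ> \<pi>) = Hn m n k"
  unfolding Hn_def using sum.permute[OF assms, of "\<lambda>i. omega m (k i)"] by (simp add: comp_def)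

lemma zero_in_fock_sector: "(\<lambda>_. 0) \<in> fock_sector n"
  and l2norm_zero: "l2norm n (\<lambda>_. 0) = 0"
  unfolding fock_sector_def symmetric_fn_def l2norm_def by auto

lemma nn_integral_fock_sector:
  assumes "\<psi> \<in> fock_sector n"
  shows "(\<integral>\<^sup>+k. ennreal ((cmod (\<psi> k))^2) \<partial>fock_measure n) = ennreal (\<integral>k. (cmod (\<psi> k))^2 \<partial>fock_measure n)"
  using assms unfolding fock_sector_def by (intro nn_integral_eq_integral) auto

lemma fock_sector_l2norm_le:
  assumes \<psi>: "\<psi> \<in> fock_sector n" and \<phi>: "\<phi> \<in> borel_measurable (fock_measure n)"
    and sym: "symmetric_fn n \<phi>" and C: "0 \<le> C"
    and le: "(\<integral>\<^sup>+k. ennreal ((cmod (\<phi> k))^2) \<partial>fock_measure n)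
      \<le> ennreal (C^2) * (\<integral>\<^sup>+k. ennreal ((cmod (\<psi> k))^2) \<partial>fock_measure n)"
  shows "\<phi> \<in> fock_sector n \<and> l2norm n \<phi> \<le> C * l2norm n \<psi>"
proof -
  define I where "I = (\<integral>k. (cmod (\<psi> k))^2 \<partial>fock_measure n)"
  have I: "0 \<le> I"
    unfolding I_def by simp
  have le': "(\<integral>\<^sup>+k. ennreal ((cmod (\<phi> k))^2) \<partial>fock_measure n) \<le> ennreal (C^2 * I)"
    using le unfolding nn_integral_fock_sector[OF \<psi>] I_def[symmetric] ennreal_mult[OF zero_le_power2 I] .
  have int: "integrable (fock_measure n) (\<lambda>k. (cmod (\<phi> k))^2)"
    using \<phi> le' by (intro integrableI_bounded) (auto simp: le_less_trans)
  then have "ennreal (\<integral>k. (cmod (\<phi> k))^2 \<partial>fock_measure n) \<le> ennreal (C^2 * I)"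
    using le' by (subst nn_integral_eq_integral[symmetric]) auto
  then have "(\<integral>k. (cmod (\<phi> k))^2 \<partial>fock_measure n) \<le> C^2 * I"
    using I by (simp add: ennreal_le_iff)
  then have "l2norm n \<phi> \<le> sqrt (C^2 * I)"
    unfolding l2norm_def by simp
  also have "\<dots> = C * l2norm n \<psi>"
    unfolding l2norm_def I_def using C by (simp add: real_sqrt_mult)
  finally show ?thesis
    using \<phi> int sym unfolding fock_sector_def by auto
qed

lemma op_norm_le:
  assumes C: "0 \<le> C" and T: "\<And>\<psi>. \<psi> \<in> fock_sector n \<Longrightarrow> l2norm n (T \<psi>) \<le> C * l2norm n \<psi>"
  shows "0 \<le> op_norm n T \<and> op_norm n T \<le> C"
proof -
  define S where "S = {l2norm n (T \<psi>) | \<psi>. \<psi> \<in> fock_sector n \<and> l2norm n \<psi> \<le> 1}"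
  have zero: "l2norm n (T (\<lambda>_. 0)) \<in> S"
    unfolding S_def using zero_in_fock_sector l2norm_zero by fastforce
  have bound: "x \<le> C" if "x \<in> S" for x
  proof -
    obtain \<psi> where \<psi>: "\<psi> \<in> fock_sector n" "l2norm n \<psi> \<le> 1" and x: "x = l2norm n (T \<psi>)"
      using \<open>x \<in> S\<close> unfolding S_def by blast
    have "x \<le> C * l2norm n \<psi>"
      using T[OF \<psi>(1)] x by simp
    also have "\<dots> \<le> C"
      using \<psi>(2) C by (simp add: mult_left_le)
    finally show ?thesis .
  qed
  have "op_norm n T = Sup S"
    unfolding op_norm_def S_def ..
  moreover have "Sup S \<le> C"
    using zero bound by (intro cSup_least) auto
  moreover have "l2norm n (T (\<lambda>_. 0)) \<le> Sup S"
    using zero bound by (intro cSup_upper bdd_aboveI) auto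
  moreover have "0 \<le> l2norm n (T (\<lambda>_. 0))"
    unfolding l2norm_def by simp
  ultimately show ?thesis
    by linarith
qed

lemma norm_integral_le_nn_integral:
  fixes f :: "'a \<Rightarrow> 'b::{banach, second_countable_topology}"
  shows "ennreal (norm (integral\<^sup>L M f)) \<le> (\<integral>\<^sup>+x. ennreal (norm (f x)) \<partial>M)"
  by (cases "integrable M f") (simp_all add: integral_norm_bound_ennreal not_integrable_integral_eq)

lemma Re_diff_le_cmod: "a - Re E \<le> cmod (complex_of_real a - E)"
  using abs_Re_le_cmod[of "complex_of_real a - E"] by simp

lemma mass_gap_fraction_le:
  fixes m \<mu>P w :: real
  assumes "0 < m" "0 \<le> \<mu>P" "m \<le> w"
  shows "(m - \<mu>P) / m * w \<le> w - \<mu>P"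
proof -
  have "w - \<mu>P - (m - \<mu>P) / m * w = \<mu>P * (w / m - 1)"
    using assms by (simp add: field_simps)
  moreover have "0 \<le> \<mu>P * (w / m - 1)"
    using assms by (simp add: field_simps mult_left_mono)
  ultimately show ?thesis
    by linarith
qed

section \<open>The operator \<open>K~(E)\<close>\<close>

lemma K_integrand_measurable:
  "(\<lambda>x. K_integrand m \<mu>P E n (fst x) (snd x)) \<in> borel_measurable (fock_measure n \<Otimes>\<^sub>M mom_measure)"
  unfolding K_integrand_def by measurable

text \<open>Trading the shift \<open>t\<close> for the shift \<open>\<surd>(m t)\<close> makes the K-integrand a multiple of
  the resolvent weight.\<close>

lemma inverse_mult_shift_le:
  fixes w t m :: real
  assumes m: "0 < m" and w: "m \<le> w" and t: "0 \<le> t"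
  shows "1 / (w * (w + t)) \<le> 2 / (w + sqrt (m * t))^2"
proof -
  define s where "s = sqrt (m * t)"
  have s: "0 \<le> s" "s^2 = m * t"
    unfolding s_def using m t by simp_all
  have le: "(w + s)^2 \<le> 2 * (w * (w + t))"
    using s(2) zero_le_power2[of "w - s"] mult_right_mono[OF w t]
    by (simp add: power2_eq_square algebra_simps)
  have pos: "0 < (w + s)^2" "0 < w * (w + t)"
    using s(1) w m t by auto
  have "1 / (w * (w + t)) = 2 / (2 * (w * (w + t)))"
    by simp
  also have "\<dots> \<le> 2 / (w + s)^2"
    using le pos by (intro divide_left_mono) auto
  finally show ?thesis
    unfolding s_def .
qed

lemma cmod_K_integrand_le:
  assumes m: "0 < m" and \<mu>P: "0 < \<mu>P" "\<mu>P < m" and t: "0 \<le> t" and c: "0 < c"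
    and p: "0 < fst p"
    and denominator: "c * (omega m p + t) \<le> cmod (complex_of_real (Hn m n k + omega m p) - E)"
  shows "cmod (K_integrand m \<mu>P E n k p)
    \<le> 2 / ((m - \<mu>P) / m * c) * resolvent_weight m (sqrt (m * t)) p"
proof -
  define c0 where "c0 = (m - \<mu>P) / m"
  define w where "w = omega m p"
  define D where "D = complex_of_real (Hn m n k + omega m p) - E"
  have c0: "0 < c0"
    unfolding c0_def using m \<mu>P by simp
  have w: "m \<le> w"
    unfolding w_def using omega_ge_mass[OF m p] .
  have D: "c * (w + t) \<le> cmod D" "0 < c * (w + t)"
    using denominator c w m t unfolding D_def w_def by auto
  have c0w: "c0 * w \<le> w - \<mu>P" "0 < c0 * w"
    unfolding c0_def using mass_gap_fraction_le[of m \<mu>P w] m \<mu>P w c0 c0_def by auto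
  have "cmod (K_integrand m \<mu>P E n k p) = 1 / (2 * fst p) / ((w - \<mu>P) * cmod D)"
  proof -
    have "cmod (complex_of_real (omega m p) - complex_of_real \<mu>P) = w - \<mu>P"
      using w \<mu>P unfolding of_real_diff[symmetric] norm_of_real w_def[symmetric] by simp
    then show ?thesis
      unfolding K_integrand_def D_def w_def using p by (simp add: norm_mult norm_divide)
  qed
  also have "\<dots> \<le> 1 / (2 * fst p) / ((c0 * w) * (c * (w + t)))"
    using p c0w D c0 c w m t \<mu>P order.strict_trans2[OF D(2,1)]
    by (intro divide_left_mono mult_mono mult_pos_pos) auto
  also have "\<dots> = 1 / (c0 * c) * (1 / (2 * fst p)) * (1 / (w * (w + t)))"
    using c0 c by (simp add: field_simps)
  also have "\<dots> \<le> 1 / (c0 * c) * (1 / (2 * fst p)) * (2 / (w + sqrt (m * t))^2)"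
    using inverse_mult_shift_le[OF m w t] c0 c p by (intro mult_left_mono) auto
  also have "\<dots> = 2 / (c0 * c) * resolvent_weight m (sqrt (m * t)) p"
    unfolding resolvent_weight_def w_def by simp
  finally show ?thesis
    unfolding c0_def .
qed

lemma nn_integral_K_integrand_le:
  assumes m: "0 < m" and \<mu>P: "0 < \<mu>P" "\<mu>P < m" and t: "0 \<le> t" and c: "0 < c"
    and denominator: "\<And>p. 0 < fst p \<Longrightarrow>
      c * (omega m p + t) \<le> cmod (complex_of_real (Hn m n k + omega m p) - E)"
  shows "(\<integral>\<^sup>+p. ennreal (cmod (K_integrand m \<mu>P E n k p)) \<partial>mom_measure)
    \<le> ennreal (2 / ((m - \<mu>P) / m * c) * (1 / (sqrt (m * t) + m)))"
proof -
  define C where "C = 2 / ((m - \<mu>P) / m * c)"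
  have C: "0 \<le> C"
    unfolding C_def using m \<mu>P c by simp
  have "(\<integral>\<^sup>+p. ennreal (cmod (K_integrand m \<mu>P E n k p)) \<partial>mom_measure)
      \<le> (\<integral>\<^sup>+p. ennreal C * ennreal (resolvent_weight m (sqrt (m * t)) p) \<partial>mom_measure)"
    using AE_mom_measure_fst_pos
  proof (rule nn_integral_mono_AE[OF eventually_mono])
    fix p :: "real \<times> real"
    assume "0 < fst p"
    then show "ennreal (cmod (K_integrand m \<mu>P E n k p)) \<le> ennreal C * ennreal (resolvent_weight m (sqrt (m * t)) p)"
      using cmod_K_integrand_le[OF m \<mu>P t c _ denominator] C
      unfolding C_def by (simp add: ennreal_mult'[symmetric] ennreal_leI)
  qed
  also have "\<dots> = ennreal C * (\<integral>\<^sup>+p. ennreal (resolvent_weight m (sqrt (m * t)) p) \<partial>mom_measure)"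
    by (rule nn_integral_cmult) measurable
  also have "\<dots> \<le> ennreal C * ennreal (1 / (sqrt (m * t) + m))"
    using m t by (intro mult_left_mono nn_integral_resolvent_weight_le) auto
  also have "\<dots> = ennreal (C * (1 / (sqrt (m * t) + m)))"
    using C by (simp add: ennreal_mult'[symmetric])
  finally show ?thesis
    unfolding C_def .
qed

lemma symmetric_fn_Ktilde:
  assumes "symmetric_fn n \<psi>"
  shows "symmetric_fn n (Ktilde m \<mu>P lam E n \<psi>)"
  using assms unfolding symmetric_fn_def Ktilde_def K_integrand_def by (simp add: Hn_permute)

lemma AE_K_multiplier_bound:
  assumes m: "0 < m" and \<mu>P: "0 < \<mu>P" "\<mu>P < m" and t: "0 \<le> t" and c: "0 < c"
    and denominator: "\<And>k p. \<forall>i<n. 0 < fst (k i) \<Longrightarrow> 0 < fst p \<Longrightarrow>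
      c * (omega m p + t) \<le> cmod (complex_of_real (Hn m n k + omega m p) - E)"
  shows "AE k in fock_measure n. integrable mom_measure (K_integrand m \<mu>P E n k)
    \<and> cmod (\<integral>p. K_integrand m \<mu>P E n k p \<partial>mom_measure) \<le> 2 / ((m - \<mu>P) / m * c) * (1 / (sqrt (m * t) + m))"
  using AE_fock_measure_fst_pos AE_space
proof eventually_elim
  case (elim k)
  define B where "B = 2 / ((m - \<mu>P) / m * c) * (1 / (sqrt (m * t) + m))"
  have "(\<integral>\<^sup>+p. ennreal (cmod (K_integrand m \<mu>P E n k p)) \<partial>mom_measure) \<le> ennreal B"
    unfolding B_def using nn_integral_K_integrand_le[OF m \<mu>P t c denominator[OF elim(1)]] .
  moreover have "K_integrand m \<mu>P E n k \<in> borel_measurable mom_measure"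
    using measurable_Pair2[OF K_integrand_measurable elim(2)] by simp
  ultimately have "integrable mom_measure (K_integrand m \<mu>P E n k)"
    by (intro integrableI_bounded) (auto intro: le_less_trans)
  moreover have "cmod (\<integral>p. K_integrand m \<mu>P E n k p \<partial>mom_measure) \<le> B"
  proof -
    have "B \<ge> 0"
      unfolding B_def using m \<mu>P c t by simp
    then show ?thesis
      using order.trans[OF norm_integral_le_nn_integral \<open>_ \<le> ennreal B\<close>] by (simp add: ennreal_le_iff)
  qed
  ultimately show ?case
    unfolding B_def by simp
qed

lemma Ktilde_bound:
  assumes m: "0 < m" and \<mu>P: "0 < \<mu>P" "\<mu>P < m" and t: "0 \<le> t" and c: "0 < c"
    and denominator: "\<And>k p. \<forall>i<n. 0 < fst (k i) \<Longrightarrow> 0 < fst p \<Longrightarrow>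
      c * (omega m p + t) \<le> cmod (complex_of_real (Hn m n k + omega m p) - E)"
    and \<psi>: "\<psi> \<in> fock_sector n"
  shows "Ktilde m \<mu>P lam E n \<psi> \<in> fock_sector n \<and>
    l2norm n (Ktilde m \<mu>P lam E n \<psi>) \<le> lam^2 * (2 / ((m - \<mu>P) / m * c) * (1 / (sqrt (m * t) + m))) * l2norm n \<psi>"
proof -
  define B where "B = 2 / ((m - \<mu>P) / m * c) * (1 / (sqrt (m * t) + m))"
  have B: "0 \<le> B"
    unfolding B_def using m \<mu>P c t by simp
  have \<psi>_meas [measurable]: "\<psi> \<in> borel_measurable (fock_measure n)"
    using \<psi> unfolding fock_sector_def by simp
  have "(\<lambda>k. \<integral>p. K_integrand m \<mu>P E n k p \<partial>mom_measure) \<in> borel_measurable (fock_measure n)"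
    using K_integrand_measurable by measurable
  then have K_meas: "Ktilde m \<mu>P lam E n \<psi> \<in> borel_measurable (fock_measure n)"
    unfolding Ktilde_def by measurable
  have "(\<integral>\<^sup>+k. ennreal ((cmod (Ktilde m \<mu>P lam E n \<psi> k))^2) \<partial>fock_measure n)
      \<le> (\<integral>\<^sup>+k. ennreal ((lam^2 * B)^2) * ennreal ((cmod (\<psi> k))^2) \<partial>fock_measure n)"
    using AE_K_multiplier_bound[OF m \<mu>P t c denominator]
  proof (rule nn_integral_mono_AE[OF eventually_mono])
    fix k
    assume "integrable mom_measure (K_integrand m \<mu>P E n k)
      \<and> cmod (\<integral>p. K_integrand m \<mu>P E n k p \<partial>mom_measure) \<le> 2 / ((m - \<mu>P) / m * c) * (1 / (sqrt (m * t) + m))"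
    then have "cmod (\<integral>p. K_integrand m \<mu>P E n k p \<partial>mom_measure) \<le> B"
      unfolding B_def by simp
    then have "lam^2 * cmod (\<integral>p. K_integrand m \<mu>P E n k p \<partial>mom_measure) * cmod (\<psi> k) \<le> lam^2 * B * cmod (\<psi> k)"
      by (intro mult_right_mono mult_left_mono) auto
    then have "cmod (Ktilde m \<mu>P lam E n \<psi> k) \<le> lam^2 * B * cmod (\<psi> k)"
      unfolding Ktilde_def by (simp add: norm_mult norm_power)
    then have "(cmod (Ktilde m \<mu>P lam E n \<psi> k))^2 \<le> (lam^2 * B)^2 * (cmod (\<psi> k))^2"
      by (metis power_mono norm_ge_zero power_mult_distrib)
    then show "ennreal ((cmod (Ktilde m \<mu>P lam E n \<psi> k))^2) \<le> ennreal ((lam^2 * B)^2) * ennreal ((cmod (\<psi> k))^2)"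
      by (simp add: ennreal_mult'[symmetric] ennreal_leI)
  qed
  also have "\<dots> = ennreal ((lam^2 * B)^2) * (\<integral>\<^sup>+k. ennreal ((cmod (\<psi> k))^2) \<partial>fock_measure n)"
    by (rule nn_integral_cmult) measurable
  finally show ?thesis
    unfolding B_def[symmetric] using B \<psi>
    by (intro fock_sector_l2norm_le K_meas symmetric_fn_Ktilde) (auto simp: fock_sector_def)
qed

section \<open>The operator \<open>U~(E)\<close>\<close>

text \<open>The two resolvents in the kernel of \<open>U~(E) = V(E) (H\<^sub>0 - E + \<mu>\<^sub>P)\<^sup>-\<^sup>1\<close>, with linear lower
  bounds in the annihilated momentum \<open>k\<^sub>j\<close> and the created momentum \<open>p\<close> respectively.\<close>

definition U_denominators_bounded ::
  "real \<Rightarrow> real \<Rightarrow> complex \<Rightarrow> nat \<Rightarrow> real \<Rightarrow> real \<Rightarrow> real \<Rightarrow> real \<Rightarrow> bool" where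
  "U_denominators_bounded m \<mu>P E n c1 d1 c2 d2 \<longleftrightarrow>
    (\<forall>j<n. \<forall>k p. (\<forall>i<n. 0 < fst (k i)) \<longrightarrow> 0 < fst p \<longrightarrow>
      c1 * (omega m (k j) + d1) \<le> cmod (complex_of_real (Hn m n (k(j := p)) + omega m (k j)) - E) \<and>
      c2 * (omega m p + d2) \<le> cmod (complex_of_real (Hn m n (k(j := p)) + \<mu>P) - E))"

lemma U_integrand_measurable:
  assumes j: "j < n" and \<psi>: "\<psi> \<in> borel_measurable (fock_measure n)"
  shows "(\<lambda>x. U_integrand m \<mu>P E n \<psi> (fst x) j (snd x)) \<in> borel_measurable (fock_measure n \<Otimes>\<^sub>M mom_measure)"
proof -
  note upd = measurable_fock_fun_upd[OF j]
  have [measurable]: "(\<lambda>x. \<psi> ((fst x)(j := snd x))) \<in> borel_measurable (fock_measure n \<Otimes>\<^sub>M mom_measure)"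
    using measurable_compose[OF upd \<psi>] .
  have [measurable]: "(\<lambda>x. Hn m n ((fst x)(j := snd x))) \<in> borel_measurable (fock_measure n \<Otimes>\<^sub>M mom_measure)"
    using measurable_compose[OF upd Hn_measurable] .
  have [measurable]: "(\<lambda>x. fst x j) \<in> measurable (fock_measure n \<Otimes>\<^sub>M mom_measure) mom_measure"
    using measurable_compose[OF measurable_fst measurable_fock_component[of j n]] j by simp
  show ?thesis
    unfolding U_integrand_def by measurable
qed

lemma nn_integral_scaled_resolvent_weight_le:
  assumes "0 < m" "0 < c" "0 \<le> d"
  shows "(\<integral>\<^sup>+q. ennreal (resolvent_weight m d q / c^2) \<partial>mom_measure) \<le> ennreal (1 / (c^2 * (d + m)))"
proof -
  have "(\<integral>\<^sup>+q. ennreal (resolvent_weight m d q / c^2) \<partial>mom_measure)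
      = ennreal (1 / c^2) * (\<integral>\<^sup>+q. ennreal (resolvent_weight m d q) \<partial>mom_measure)"
    by (subst nn_integral_cmult[symmetric]) (auto intro!: nn_integral_cong simp: ennreal_mult'[symmetric])
  also have "\<dots> \<le> ennreal (1 / c^2) * ennreal (1 / (d + m))"
    using assms by (intro mult_left_mono nn_integral_resolvent_weight_le) auto
  also have "\<dots> = ennreal (1 / (c^2 * (d + m)))"
    using assms by (simp add: ennreal_mult[symmetric])
  finally show ?thesis .
qed

lemma cmod_U_integrand_le:
  assumes m: "0 < m" and c1: "0 < c1" and c2: "0 < c2" and d1: "0 \<le> d1" and d2: "0 \<le> d2"
    and q: "0 < fst (k j)" and p: "0 < fst p"
    and D1: "c1 * (omega m (k j) + d1) \<le> cmod (complex_of_real (Hn m n (k(j := p)) + omega m (k j)) - E)"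
    and D2: "c2 * (omega m p + d2) \<le> cmod (complex_of_real (Hn m n (k(j := p)) + \<mu>P) - E)"
  shows "cmod (U_integrand m \<mu>P E n \<psi> k j p)
    \<le> sqrt (resolvent_weight m d1 (k j) / c1^2 * (resolvent_weight m d2 p / c2^2)) * cmod (\<psi> (k(j := p)))"
proof -
  define A1 where "A1 = c1 * (omega m (k j) + d1)"
  define A2 where "A2 = c2 * (omega m p + d2)"
  define r where "r = 1 / (2 * sqrt (fst p * fst (k j)))"
  have A: "0 < A1" "0 < A2"
    unfolding A1_def A2_def using c1 c2 d1 d2 omega_ge_mass[OF m q] omega_ge_mass[OF m p] m by auto
  have r: "0 \<le> r"
    unfolding r_def using p q by simp
  have "cmod (U_integrand m \<mu>P E n \<psi> k j p)
      = r / cmod (complex_of_real (Hn m n (k(j := p)) + omega m (k j)) - E)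
        * (cmod (\<psi> (k(j := p))) / cmod (complex_of_real (Hn m n (k(j := p)) + \<mu>P) - E))"
    unfolding U_integrand_def r_def using p q by (simp add: norm_mult norm_divide)
  also have "\<dots> \<le> r / A1 * (cmod (\<psi> (k(j := p))) / A2)"
    using A r D1 D2 order.strict_trans2[OF A(1) D1[folded A1_def]] order.strict_trans2[OF A(2) D2[folded A2_def]]
    unfolding A1_def[symmetric] A2_def[symmetric]
    by (intro mult_mono divide_left_mono divide_right_mono) (auto intro: frac_le)
  also have "\<dots> = r / A1 / A2 * cmod (\<psi> (k(j := p)))"
    by simp
  also have "r / A1 / A2 = sqrt (resolvent_weight m d1 (k j) / c1^2 * (resolvent_weight m d2 p / c2^2))"
  proof -
    have "(r / A1 / A2)^2 = 1 / (4 * (sqrt (fst p * fst (k j)))^2 * A1^2 * A2^2)"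
      unfolding r_def by (simp add: power_divide power_mult_distrib)
    also have "\<dots> = resolvent_weight m d1 (k j) / c1^2 * (resolvent_weight m d2 p / c2^2)"
      unfolding resolvent_weight_def A1_def A2_def power_mult_distrib using p q by simp
    finally show ?thesis
      using A r by (metis real_sqrt_abs abs_of_nonneg divide_nonneg_pos)
  qed
  finally show ?thesis .
qed

lemma nn_integral_U_integrand_sq_le:
  assumes m: "0 < m" and c1: "0 < c1" and c2: "0 < c2" and d1: "0 \<le> d1" and d2: "0 \<le> d2"
    and bounded: "U_denominators_bounded m \<mu>P E n c1 d1 c2 d2"
    and j: "j < n" and k: "k \<in> space (fock_measure n)" and k_pos: "\<forall>i<n. 0 < fst (k i)"
    and \<psi>: "\<psi> \<in> borel_measurable (fock_measure n)"
  shows "(\<integral>\<^sup>+p. ennreal (cmod (U_integrand m \<mu>P E n \<psi> k j p)) \<partial>mom_measure)^2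
    \<le> ennreal (resolvent_weight m d1 (k j) / c1^2) * ennreal (1 / (c2^2 * (d2 + m)))
      * (\<integral>\<^sup>+p. ennreal ((cmod (\<psi> (k(j := p))))^2) \<partial>mom_measure)"
proof -
  define a where "a = resolvent_weight m d1 (k j) / c1^2"
  define b where "b p = resolvent_weight m d2 p / c2^2" for p
  have q: "0 < fst (k j)"
    using k_pos j by simp
  have a: "0 \<le> a"
    unfolding a_def resolvent_weight_def using q by simp
  have b: "0 \<le> b p" if "0 < fst p" for p
    unfolding b_def resolvent_weight_def using that by simp
  have [measurable]: "(\<lambda>p. \<psi> (k(j := p))) \<in> borel_measurable mom_measure"
    using measurable_Pair2[OF measurable_compose[OF measurable_fock_fun_upd[OF j] \<psi>] k] by simp
  have [measurable]: "b \<in> borel_measurable mom_measure"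
    unfolding b_def by measurable
  have "(\<integral>\<^sup>+p. ennreal (cmod (U_integrand m \<mu>P E n \<psi> k j p)) \<partial>mom_measure)
      \<le> (\<integral>\<^sup>+p. ennreal (sqrt (a * b p)) * ennreal (cmod (\<psi> (k(j := p)))) \<partial>mom_measure)"
    using AE_mom_measure_fst_pos
  proof (rule nn_integral_mono_AE[OF eventually_mono])
    fix p :: "real \<times> real"
    assume p: "0 < fst p"
    have "cmod (U_integrand m \<mu>P E n \<psi> k j p) \<le> sqrt (a * b p) * cmod (\<psi> (k(j := p)))"
      unfolding a_def b_def
      using cmod_U_integrand_le[OF m c1 c2 d1 d2, of k j p] q p bounded j k_pos
      unfolding U_denominators_bounded_def by blast
    then show "ennreal (cmod (U_integrand m \<mu>P E n \<psi> k j p))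
        \<le> ennreal (sqrt (a * b p)) * ennreal (cmod (\<psi> (k(j := p))))"
      using a b[OF p] by (simp add: ennreal_mult[symmetric] ennreal_leI)
  qed
  then have "(\<integral>\<^sup>+p. ennreal (cmod (U_integrand m \<mu>P E n \<psi> k j p)) \<partial>mom_measure)^2
      \<le> (\<integral>\<^sup>+p. ennreal (sqrt (a * b p)) * ennreal (cmod (\<psi> (k(j := p)))) \<partial>mom_measure)^2"
    by (rule power_mono) simp
  also have "\<dots> \<le> (\<integral>\<^sup>+p. ennreal (sqrt (a * b p))^2 \<partial>mom_measure)
      * (\<integral>\<^sup>+p. ennreal (cmod (\<psi> (k(j := p))))^2 \<partial>mom_measure)"
    by (rule Cauchy_Schwarz_nn_integral) measurable
  also have "(\<integral>\<^sup>+p. ennreal (sqrt (a * b p))^2 \<partial>mom_measure) = ennreal a * (\<integral>\<^sup>+p. ennreal (b p) \<partial>mom_measure)"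
  proof -
    have "(\<integral>\<^sup>+p. ennreal (sqrt (a * b p))^2 \<partial>mom_measure) = (\<integral>\<^sup>+p. ennreal a * ennreal (b p) \<partial>mom_measure)"
      using AE_mom_measure_fst_pos
    proof (intro nn_integral_cong_AE, elim eventually_mono)
      fix p :: "real \<times> real"
      assume "0 < fst p"
      then have bp: "0 \<le> b p"
        by (rule b)
      then have "ennreal (sqrt (a * b p))^2 = ennreal (a * b p)"
        using a by (simp add: ennreal_power)
      then show "ennreal (sqrt (a * b p))^2 = ennreal a * ennreal (b p)"
        using a bp by (simp add: ennreal_mult)
    qed
    then show ?thesis
      by (simp add: nn_integral_cmult)
  qed
  also have "\<dots> \<le> ennreal a * ennreal (1 / (c2^2 * (d2 + m)))"
    unfolding b_def by (intro mult_left_mono nn_integral_scaled_resolvent_weight_le m c2 d2) simp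
  also have "(\<integral>\<^sup>+p. ennreal (cmod (\<psi> (k(j := p))))^2 \<partial>mom_measure)
      = (\<integral>\<^sup>+p. ennreal ((cmod (\<psi> (k(j := p))))^2) \<partial>mom_measure)"
    by (simp add: ennreal_power)
  finally show ?thesis
    unfolding a_def by (simp add: mult_right_mono)
qed

text \<open>Integrating the previous bound over \<open>k\<close> by first integrating out \<open>k\<^sub>j\<close>: the factor
  depending on \<open>k\<^sub>j\<close> is the resolvent weight, while the \<open>\<psi>\<close>-integral does not depend on \<open>k\<^sub>j\<close>.\<close>

lemma nn_integral_U_integrand_fock_le:
  assumes m: "0 < m" and c1: "0 < c1" and c2: "0 < c2" and d1: "0 \<le> d1" and d2: "0 \<le> d2"
    and bounded: "U_denominators_bounded m \<mu>P E n c1 d1 c2 d2"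
    and j: "j < n" and \<psi>: "\<psi> \<in> borel_measurable (fock_measure n)"
  shows "(\<integral>\<^sup>+k. (\<integral>\<^sup>+p. ennreal (cmod (U_integrand m \<mu>P E n \<psi> k j p)) \<partial>mom_measure)^2 \<partial>fock_measure n)
    \<le> ennreal (1 / (c1^2 * (d1 + m)) * (1 / (c2^2 * (d2 + m))))
      * (\<integral>\<^sup>+k. ennreal ((cmod (\<psi> k))^2) \<partial>fock_measure n)"
proof -
  define A1 where "A1 = 1 / (c1^2 * (d1 + m))"
  define A2 where "A2 = 1 / (c2^2 * (d2 + m))"
  define G where "G k = (\<integral>\<^sup>+p. ennreal ((cmod (\<psi> (k(j := p))))^2) \<partial>mom_measure)" for k
  let ?P = "PiM ({..<n} - {j}) (\<lambda>_. mom_measure)"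
  have A: "0 \<le> A1" "0 \<le> A2"
    unfolding A1_def A2_def using m d1 d2 by auto
  have "(\<lambda>x. ennreal ((cmod (\<psi> ((fst x)(j := snd x))))^2)) \<in> borel_measurable (fock_measure n \<Otimes>\<^sub>M mom_measure)"
    using measurable_compose[OF measurable_fock_fun_upd[OF j] \<psi>] by measurable
  then have [measurable]: "G \<in> borel_measurable (fock_measure n)"
    unfolding G_def by measurable
  have "(\<lambda>x. ennreal ((cmod (\<psi> ((fst x)(j := snd x))))^2)) \<in> borel_measurable (?P \<Otimes>\<^sub>M mom_measure)"
    using measurable_compose[OF measurable_fock_fun_upd_complement[OF j] \<psi>] by measurable
  then have [measurable]: "(\<lambda>x. \<integral>\<^sup>+p. ennreal ((cmod (\<psi> (x(j := p))))^2) \<partial>mom_measure) \<in> borel_measurable ?P"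
    by measurable
  have "(\<lambda>k. resolvent_weight m d1 (k j)) \<in> borel_measurable (fock_measure n)"
    using measurable_compose[OF measurable_fock_component resolvent_weight_measurable] j by simp
  then have [measurable]: "(\<lambda>k. resolvent_weight m d1 (k j) / c1^2) \<in> borel_measurable (fock_measure n)"
    by measurable
  have "(\<integral>\<^sup>+k. (\<integral>\<^sup>+p. ennreal (cmod (U_integrand m \<mu>P E n \<psi> k j p)) \<partial>mom_measure)^2 \<partial>fock_measure n)
      \<le> (\<integral>\<^sup>+k. ennreal (resolvent_weight m d1 (k j) / c1^2) * ennreal A2 * G k \<partial>fock_measure n)"
    using AE_fock_measure_fst_pos AE_space
  proof (rule nn_integral_mono_AE[OF eventually_mono[OF eventually_conj]])
    fix k
    assume "(\<forall>i<n. 0 < fst (k i)) \<and> k \<in> space (fock_measure n)"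
    then show "(\<integral>\<^sup>+p. ennreal (cmod (U_integrand m \<mu>P E n \<psi> k j p)) \<partial>mom_measure)^2
        \<le> ennreal (resolvent_weight m d1 (k j) / c1^2) * ennreal A2 * G k"
      unfolding A2_def G_def using nn_integral_U_integrand_sq_le[OF m c1 c2 d1 d2 bounded j _ _ \<psi>] by blast
  qed
  also have "\<dots> = (\<integral>\<^sup>+x. \<integral>\<^sup>+y. ennreal (resolvent_weight m d1 y / c1^2) * (ennreal A2 * G x) \<partial>mom_measure \<partial>?P)"
    by (subst nn_integral_fock_measure_fun_upd[OF j], measurable) (simp add: G_def mult.assoc)
  also have "\<dots> = (\<integral>\<^sup>+x. (\<integral>\<^sup>+y. ennreal (resolvent_weight m d1 y / c1^2) \<partial>mom_measure) * (ennreal A2 * G x) \<partial>?P)"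
    by (intro nn_integral_cong nn_integral_multc) measurable
  also have "\<dots> \<le> (\<integral>\<^sup>+x. ennreal A1 * (ennreal A2 * G x) \<partial>?P)"
    unfolding A1_def by (intro nn_integral_mono mult_right_mono nn_integral_scaled_resolvent_weight_le m c1 d1) simp
  also have "\<dots> = ennreal (A1 * A2) * (\<integral>\<^sup>+x. G x \<partial>?P)"
    using A unfolding G_def by (subst nn_integral_cmult[symmetric]) (auto simp: ennreal_mult mult.assoc)
  also have "(\<integral>\<^sup>+x. G x \<partial>?P) = (\<integral>\<^sup>+k. ennreal ((cmod (\<psi> k))^2) \<partial>fock_measure n)"
    unfolding G_def by (rule nn_integral_fock_measure_fun_upd[OF j, symmetric]) (use \<psi> in measurable)
  finally show ?thesis
    unfolding A1_def A2_def .
qed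

lemma cmod_Utilde_sq_le:
  "ennreal ((cmod (Utilde m \<mu>P lam E n \<psi> k))^2)
    \<le> ennreal (lam^4 * real n) * (\<Sum>j<n. (\<integral>\<^sup>+p. ennreal (cmod (U_integrand m \<mu>P E n \<psi> k j p)) \<partial>mom_measure)^2)"
proof -
  define T where "T j = (\<integral>p. U_integrand m \<mu>P E n \<psi> k j p \<partial>mom_measure)" for j
  have "cmod (Utilde m \<mu>P lam E n \<psi> k) \<le> lam^2 * (\<Sum>j<n. cmod (T j))"
    unfolding Utilde_def T_def by (simp add: norm_mult norm_power mult_left_mono norm_sum)
  then have "(cmod (Utilde m \<mu>P lam E n \<psi> k))^2 \<le> (lam^2 * (\<Sum>j<n. cmod (T j)))^2"
    by (intro power_mono) auto
  also have "\<dots> = lam^4 * (\<Sum>j<n. cmod (T j))^2"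
    by (simp add: power_mult_distrib)
  also have "\<dots> \<le> lam^4 * (real n * (\<Sum>j<n. (cmod (T j))^2))"
    using sum_squared_le_sum_of_squares[of "\<lambda>j. cmod (T j)" "{..<n}"]
    by (intro mult_left_mono) (auto simp: mult.commute)
  finally have "ennreal ((cmod (Utilde m \<mu>P lam E n \<psi> k))^2)
      \<le> ennreal (lam^4 * real n * (\<Sum>j<n. (cmod (T j))^2))"
    by (simp add: ennreal_leI mult.assoc)
  also have "\<dots> = ennreal (lam^4 * real n) * (\<Sum>j<n. ennreal (cmod (T j)) ^ 2)"
    by (simp add: ennreal_mult' ennreal_power)
  also have "\<dots> \<le> ennreal (lam^4 * real n) * (\<Sum>j<n. (\<integral>\<^sup>+p. ennreal (cmod (U_integrand m \<mu>P E n \<psi> k j p)) \<partial>mom_measure)^2)"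
    unfolding T_def by (intro mult_left_mono sum_mono power_mono norm_integral_le_nn_integral) auto
  finally show ?thesis .
qed

lemma nn_integral_Utilde_sq_le:
  assumes m: "0 < m" and c1: "0 < c1" and c2: "0 < c2" and d1: "0 \<le> d1" and d2: "0 \<le> d2"
    and bounded: "U_denominators_bounded m \<mu>P E n c1 d1 c2 d2"
    and \<psi>: "\<psi> \<in> borel_measurable (fock_measure n)"
  shows "(\<integral>\<^sup>+k. ennreal ((cmod (Utilde m \<mu>P lam E n \<psi> k))^2) \<partial>fock_measure n)
    \<le> ennreal ((lam^2 * real n)^2 * (1 / (c1^2 * (d1 + m)) * (1 / (c2^2 * (d2 + m)))))
      * (\<integral>\<^sup>+k. ennreal ((cmod (\<psi> k))^2) \<partial>fock_measure n)"
proof -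
  define A where "A = 1 / (c1^2 * (d1 + m)) * (1 / (c2^2 * (d2 + m)))"
  define I where "I j k = (\<integral>\<^sup>+p. ennreal (cmod (U_integrand m \<mu>P E n \<psi> k j p)) \<partial>mom_measure)" for j k
  define N where "N = (\<integral>\<^sup>+k. ennreal ((cmod (\<psi> k))^2) \<partial>fock_measure n)"
  have A: "0 \<le> A"
    unfolding A_def using m d1 d2 by simp
  have [measurable]: "(\<lambda>k. I j k) \<in> borel_measurable (fock_measure n)" if "j \<in> {..<n}" for j
    unfolding I_def using U_integrand_measurable[OF that[simplified] \<psi>] by measurable
  have "(\<integral>\<^sup>+k. ennreal ((cmod (Utilde m \<mu>P lam E n \<psi> k))^2) \<partial>fock_measure n)
      \<le> (\<integral>\<^sup>+k. ennreal (lam^4 * real n) * (\<Sum>j<n. (I j k)^2) \<partial>fock_measure n)"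
    unfolding I_def by (intro nn_integral_mono cmod_Utilde_sq_le)
  also have "\<dots> = ennreal (lam^4 * real n) * (\<Sum>j<n. \<integral>\<^sup>+k. (I j k)^2 \<partial>fock_measure n)"
    by (subst nn_integral_sum[symmetric]) (simp_all add: nn_integral_cmult)
  also have "\<dots> \<le> ennreal (lam^4 * real n) * (\<Sum>j<n. ennreal A * N)"
    unfolding I_def A_def N_def
    by (intro mult_left_mono sum_mono nn_integral_U_integrand_fock_le[OF m c1 c2 d1 d2 bounded _ \<psi>]) auto
  also have "\<dots> = ennreal (lam^4 * real n * real n * A) * N"
    using A by (simp add: ennreal_of_nat_eq_real_of_nat ennreal_mult' mult.assoc)
  also have "lam^4 * real n * real n * A = (lam^2 * real n)^2 * A"
    by (simp add: power_mult_distrib power2_eq_square[of "real n"])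
  finally show ?thesis
    unfolding A_def N_def .
qed

lemma AE_integrable_U_integrand:
  assumes m: "0 < m" and c1: "0 < c1" and c2: "0 < c2" and d1: "0 \<le> d1" and d2: "0 \<le> d2"
    and bounded: "U_denominators_bounded m \<mu>P E n c1 d1 c2 d2"
    and \<psi>: "\<psi> \<in> borel_measurable (fock_measure n)"
    and finite: "(\<integral>\<^sup>+k. ennreal ((cmod (\<psi> k))^2) \<partial>fock_measure n) < \<infinity>"
  shows "AE k in fock_measure n. \<forall>j<n. integrable mom_measure (U_integrand m \<mu>P E n \<psi> k j)"
proof -
  have "AE k in fock_measure n. integrable mom_measure (U_integrand m \<mu>P E n \<psi> k j)" if j: "j < n" for j
  proof -
    define I where "I k = (\<integral>\<^sup>+p. ennreal (cmod (U_integrand m \<mu>P E n \<psi> k j p)) \<partial>mom_measure)" for k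
    have [measurable]: "(\<lambda>k. (I k)^2) \<in> borel_measurable (fock_measure n)"
      unfolding I_def using U_integrand_measurable[OF j \<psi>] by measurable
    have "(\<integral>\<^sup>+k. (I k)^2 \<partial>fock_measure n)
        \<le> ennreal (1 / (c1^2 * (d1 + m)) * (1 / (c2^2 * (d2 + m)))) * (\<integral>\<^sup>+k. ennreal ((cmod (\<psi> k))^2) \<partial>fock_measure n)"
      unfolding I_def by (rule nn_integral_U_integrand_fock_le[OF m c1 c2 d1 d2 bounded j \<psi>])
    also have "\<dots> < \<infinity>"
      using finite by (simp add: ennreal_mult_less_top)
    finally have "AE k in fock_measure n. (I k)^2 \<noteq> \<infinity>"
      by (intro nn_integral_PInf_AE) auto
    with AE_space show ?thesis
    proof eventually_elim
      case (elim k)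
      have "I k < \<infinity>"
        using elim(2) by (simp add: power_eq_top_ennreal top.not_eq_extremum)
      moreover have "U_integrand m \<mu>P E n \<psi> k j \<in> borel_measurable mom_measure"
        using measurable_Pair2[OF U_integrand_measurable[OF j \<psi>] elim(1)] by simp
      ultimately show ?case
        unfolding I_def by (intro integrableI_bounded) auto
    qed
  qed
  then have "AE k in fock_measure n. \<forall>j\<in>{..<n}. integrable mom_measure (U_integrand m \<mu>P E n \<psi> k j)"
    by (intro eventually_ball_finite) auto
  then show ?thesis
    by (simp only: lessThan_iff Ball_def)
qed

lemma symmetric_fn_Utilde:
  assumes sym: "symmetric_fn n \<psi>"
  shows "symmetric_fn n (Utilde m \<mu>P lam E n \<psi>)"
  unfolding symmetric_fn_def
proof (intro allI impI ballI)
  fix \<pi> k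
  assume \<pi>: "\<pi> permutes {..<n}" and k: "k \<in> space (fock_measure n)"
  have U_permute: "U_integrand m \<mu>P E n \<psi> (k \<circ> \<pi>) j = U_integrand m \<mu>P E n \<psi> k (\<pi> j)" if j: "j < n" for j
  proof
    fix q
    have "(k \<circ> \<pi>)(j := q) = (k(\<pi> j := q)) \<circ> \<pi>"
      using permutes_inj[OF \<pi>] by (auto simp: fun_eq_iff inj_eq)
    moreover have "k(\<pi> j := q) \<in> space (fock_measure n)"
      using k permutes_in_image[OF \<pi>] j unfolding space_fock_measure by (auto simp: PiE_iff extensional_def)
    then have "\<psi> ((k(\<pi> j := q)) \<circ> \<pi>) = \<psi> (k(\<pi> j := q))"
      using sym \<pi> unfolding symmetric_fn_def by blast
    ultimately show "U_integrand m \<mu>P E n \<psi> (k \<circ> \<pi>) j q = U_integrand m \<mu>P E n \<psi> k (\<pi> j) q"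
      unfolding U_integrand_def by (simp add: Hn_permute[OF \<pi>])
  qed
  have "(\<Sum>j<n. \<integral>q. U_integrand m \<mu>P E n \<psi> (k \<circ> \<pi>) j q \<partial>mom_measure)
      = (\<Sum>j<n. \<integral>q. U_integrand m \<mu>P E n \<psi> k (\<pi> j) q \<partial>mom_measure)"
    using U_permute by (intro sum.cong) auto
  also have "\<dots> = (\<Sum>j<n. \<integral>q. U_integrand m \<mu>P E n \<psi> k j q \<partial>mom_measure)"
    using sum.permute[OF \<pi>, of "\<lambda>j. \<integral>q. U_integrand m \<mu>P E n \<psi> k j q \<partial>mom_measure"] by (simp add: comp_def)
  finally show "Utilde m \<mu>P lam E n \<psi> (k \<circ> \<pi>) = Utilde m \<mu>P lam E n \<psi> k"
    unfolding Utilde_def by simp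
qed

lemma Utilde_bound:
  assumes m: "0 < m" and c1: "0 < c1" and c2: "0 < c2" and d1: "0 \<le> d1" and d2: "0 \<le> d2"
    and bounded: "U_denominators_bounded m \<mu>P E n c1 d1 c2 d2"
    and \<psi>: "\<psi> \<in> fock_sector n"
  shows "(AE k in fock_measure n. \<forall>j<n. integrable mom_measure (U_integrand m \<mu>P E n \<psi> k j))
    \<and> Utilde m \<mu>P lam E n \<psi> \<in> fock_sector n
    \<and> l2norm n (Utilde m \<mu>P lam E n \<psi>)
      \<le> lam^2 * real n * sqrt (1 / (c1^2 * (d1 + m)) * (1 / (c2^2 * (d2 + m)))) * l2norm n \<psi>"
proof -
  define A where "A = 1 / (c1^2 * (d1 + m)) * (1 / (c2^2 * (d2 + m)))"
  have A: "0 \<le> A"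
    unfolding A_def using m d1 d2 by simp
  have \<psi>_meas [measurable]: "\<psi> \<in> borel_measurable (fock_measure n)"
    using \<psi> unfolding fock_sector_def by simp
  have "(\<lambda>k. \<integral>p. U_integrand m \<mu>P E n \<psi> k j p \<partial>mom_measure) \<in> borel_measurable (fock_measure n)"
    if "j \<in> {..<n}" for j
    using U_integrand_measurable[OF that[simplified] \<psi>_meas] by measurable
  then have "Utilde m \<mu>P lam E n \<psi> \<in> borel_measurable (fock_measure n)"
    unfolding Utilde_def by measurable
  moreover have "(\<integral>\<^sup>+k. ennreal ((cmod (Utilde m \<mu>P lam E n \<psi> k))^2) \<partial>fock_measure n)
      \<le> ennreal ((lam^2 * real n * sqrt A)^2) * (\<integral>\<^sup>+k. ennreal ((cmod (\<psi> k))^2) \<partial>fock_measure n)"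
    using nn_integral_Utilde_sq_le[OF m c1 c2 d1 d2 bounded \<psi>_meas] A
    unfolding A_def by (simp add: power_mult_distrib)
  ultimately have "Utilde m \<mu>P lam E n \<psi> \<in> fock_sector n
      \<and> l2norm n (Utilde m \<mu>P lam E n \<psi>) \<le> lam^2 * real n * sqrt A * l2norm n \<psi>"
    using \<psi> A by (intro fock_sector_l2norm_le symmetric_fn_Utilde) (auto simp: fock_sector_def)
  moreover have "AE k in fock_measure n. \<forall>j<n. integrable mom_measure (U_integrand m \<mu>P E n \<psi> k j)"
    using \<psi> by (intro AE_integrable_U_integrand[OF m c1 c2 d1 d2 bounded \<psi>_meas])
      (simp add: nn_integral_fock_sector)
  ultimately show ?thesis
    unfolding A_def by simp
qed

section \<open>Estimates below the threshold\<close>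

lemma K_denominator_ge:
  assumes "0 < m" "\<forall>i<n. 0 < fst (k i)"
  shows "real n * m + omega m p - Re E \<le> cmod (complex_of_real (Hn m n k + omega m p) - E)"
  using Hn_ge_mass[OF assms] Re_diff_le_cmod[of "Hn m n k + omega m p" E] by linarith

lemma intermediate_denominator_ge:
  assumes m: "0 < m" and "\<forall>i<n. 0 < fst (k i)" "j < n" "0 < fst p"
  shows "real n * m + omega m q - Re E \<le> cmod (complex_of_real (Hn m n (k(j := p)) + omega m q) - E)"
proof -
  have "real (n - 1) * m + m \<le> Hn m n (k(j := p))"
    using Hn_fun_upd_ge[OF assms] omega_ge_mass[OF m \<open>0 < fst p\<close>] by linarith
  then have "real n * m \<le> Hn m n (k(j := p))"
    using \<open>j < n\<close> by (simp add: of_nat_diff algebra_simps)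
  then show ?thesis
    using Re_diff_le_cmod[of "Hn m n (k(j := p)) + omega m q" E] by linarith
qed

lemma bare_denominator_ge:
  assumes "0 < m" "\<forall>i<n. 0 < fst (k i)" "j < n" "0 < fst p"
  shows "(real n - 1) * m + omega m p + \<mu>P - Re E \<le> cmod (complex_of_real (Hn m n (k(j := p)) + \<mu>P) - E)"
  using Hn_fun_upd_ge[OF assms] Re_diff_le_cmod[of "Hn m n (k(j := p)) + \<mu>P" E] \<open>j < n\<close>
  by (simp add: of_nat_diff)

lemma min_one_ratio_mult_le:
  fixes w m \<delta> :: real
  assumes m: "0 < m" and w: "m \<le> w" and \<delta>: "0 < \<delta>"
  shows "min 1 (\<delta> / m) * w \<le> w - m + \<delta>"
proof (cases "m \<le> \<delta>")
  case False
  then have "0 \<le> (1 - \<delta> / m) * (w - m)"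
    using m w by (intro mult_nonneg_nonneg) (auto simp: field_simps)
  then show ?thesis
    using False m by (simp add: min_def field_simps)
qed (use m in \<open>simp add: min_def\<close>)

text \<open>Below \<open>n m + \<mu>\<^sub>P\<close> the intermediate denominator is controlled by the mass gap
  \<open>m - \<mu>\<^sub>P\<close> and the bare one by the distance \<open>n m + \<mu>\<^sub>P - Re E\<close> to the threshold.\<close>

lemma U_denominators_bounded_below_threshold:
  assumes m: "0 < m" and \<mu>P: "0 \<le> \<mu>P" and E: "Re E < real n * m + \<mu>P"
  shows "U_denominators_bounded m \<mu>P E n ((m - \<mu>P) / m) 0 (min 1 ((real n * m + \<mu>P - Re E) / m)) 0"
  unfolding U_denominators_bounded_def
proof (intro allI impI conjI)
  fix j :: nat and k :: "nat \<Rightarrow> real \<times> real" and p :: "real \<times> real"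
  assume j: "j < n" and k: "\<forall>i<n. 0 < fst (k i)" and p: "0 < fst p"
  have "(m - \<mu>P) / m * (omega m (k j) + 0) \<le> omega m (k j) - \<mu>P"
    using mass_gap_fraction_le[OF m _ omega_ge_mass[OF m]] \<mu>P k j by simp
  also have "\<dots> \<le> cmod (complex_of_real (Hn m n (k(j := p)) + omega m (k j)) - E)"
    using intermediate_denominator_ge[OF m k j p, of "k j" E] E by linarith
  finally show "(m - \<mu>P) / m * (omega m (k j) + 0)
      \<le> cmod (complex_of_real (Hn m n (k(j := p)) + omega m (k j)) - E)" .
  have "min 1 ((real n * m + \<mu>P - Re E) / m) * (omega m p + 0)
      \<le> omega m p - m + (real n * m + \<mu>P - Re E)"
    using min_one_ratio_mult_le[OF m omega_ge_mass[OF m p]] E by simp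
  also have "\<dots> \<le> cmod (complex_of_real (Hn m n (k(j := p)) + \<mu>P) - E)"
    using bare_denominator_ge[OF m k j p, of \<mu>P E] by (simp add: algebra_simps)
  finally show "min 1 ((real n * m + \<mu>P - Re E) / m) * (omega m p + 0)
      \<le> cmod (complex_of_real (Hn m n (k(j := p)) + \<mu>P) - E)" .
qed

lemma U_denominators_bounded_below_lower_threshold:
  fixes E :: complex and n :: nat
  assumes m: "0 < m" and \<mu>P: "\<mu>P < m"
  defines "D \<equiv> (real n - 1) * m + \<mu>P - Re E"
  shows "U_denominators_bounded m \<mu>P E n 1 D 1 D"
  unfolding U_denominators_bounded_def
proof (intro allI impI conjI)
  fix j :: nat and k :: "nat \<Rightarrow> real \<times> real" and p :: "real \<times> real"
  assume j: "j < n" and k: "\<forall>i<n. 0 < fst (k i)" and p: "0 < fst p"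
  show "1 * (omega m (k j) + D) \<le> cmod (complex_of_real (Hn m n (k(j := p)) + omega m (k j)) - E)"
    using intermediate_denominator_ge[OF m k j p, of "k j" E] \<mu>P unfolding D_def
    by (simp add: algebra_simps)
  show "1 * (omega m p + D) \<le> cmod (complex_of_real (Hn m n (k(j := p)) + \<mu>P) - E)"
    using bare_denominator_ge[OF m k j p, of \<mu>P E] unfolding D_def by (simp add: algebra_simps)
qed

lemma Ktilde_bounded:
  assumes m: "0 < m" and \<mu>P: "0 < \<mu>P" "\<mu>P < m" and E: "Re E < real n * m + \<mu>P"
  shows "(AE k in fock_measure n. integrable mom_measure (K_integrand m \<mu>P E n k))
    \<and> bounded_op n (Ktilde m \<mu>P lam E n)"
proof -
  have c: "0 < (m - \<mu>P) / m"
    using m \<mu>P by simp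
  have denominator: "(m - \<mu>P) / m * (omega m p + 0) \<le> cmod (complex_of_real (Hn m n k + omega m p) - E)"
    if "\<forall>i<n. 0 < fst (k i)" "0 < fst p" for k p
    using mass_gap_fraction_le[OF m less_imp_le[OF \<mu>P(1)] omega_ge_mass[OF m that(2)]]
      K_denominator_ge[OF m that(1), of p E] E
    by simp
  have "AE k in fock_measure n. integrable mom_measure (K_integrand m \<mu>P E n k)"
    by (rule eventually_mono[OF AE_K_multiplier_bound[OF m \<mu>P order.refl c denominator]]) simp_all
  moreover have "bounded_op n (Ktilde m \<mu>P lam E n)"
    unfolding bounded_op_def by (rule exI, rule ballI, rule Ktilde_bound[OF m \<mu>P order.refl c denominator])
  ultimately show ?thesis ..
qed

lemma Utilde_bounded:
  assumes m: "0 < m" and \<mu>P: "0 < \<mu>P" "\<mu>P < m" and E: "Re E < real n * m + \<mu>P"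
  shows "(\<forall>\<psi> \<in> fock_sector n. AE k in fock_measure n. \<forall>j<n. integrable mom_measure (U_integrand m \<mu>P E n \<psi> k j))
    \<and> bounded_op n (Utilde m \<mu>P lam E n)"
proof -
  have c: "0 < (m - \<mu>P) / m" "0 < min 1 ((real n * m + \<mu>P - Re E) / m)"
    using m \<mu>P E by auto
  note bound = Utilde_bound[OF m c order.refl order.refl
      U_denominators_bounded_below_threshold[OF m less_imp_le[OF \<mu>P(1)] E]]
  show ?thesis
    unfolding bounded_op_def using bound by blast
qed

lemma op_norm_Utilde_le:
  assumes m: "0 < m" and \<mu>P: "\<mu>P < m" and E: "Re E < (real n - 1) * m + \<mu>P"
  shows "0 \<le> op_norm n (Utilde m \<mu>P lam E n)
    \<and> op_norm n (Utilde m \<mu>P lam E n) \<le> lam^2 * real n / ((real n - 1) * m + \<mu>P - Re E)"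
proof -
  define D where "D = (real n - 1) * m + \<mu>P - Re E"
  have D: "0 < D"
    unfolding D_def using E by simp
  have bounded: "U_denominators_bounded m \<mu>P E n 1 D 1 D"
    unfolding D_def by (rule U_denominators_bounded_below_lower_threshold[OF m \<mu>P])
  have "sqrt (1 / (1^2 * (D + m)) * (1 / (1^2 * (D + m)))) = 1 / (D + m)"
    using D m by (simp add: real_sqrt_mult[symmetric] power2_eq_square[symmetric])
  then have "l2norm n (Utilde m \<mu>P lam E n \<psi>) \<le> lam^2 * real n * (1 / (D + m)) * l2norm n \<psi>"
    if "\<psi> \<in> fock_sector n" for \<psi>
    using Utilde_bound[OF m zero_less_one zero_less_one _ _ bounded that] D by simp
  then have "0 \<le> op_norm n (Utilde m \<mu>P lam E n) \<and> op_norm n (Utilde m \<mu>P lam E n) \<le> lam^2 * real n * (1 / (D + m))"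
    using D m by (intro op_norm_le) auto
  moreover have "lam^2 * real n * (1 / (D + m)) \<le> lam^2 * real n / D"
    using D m by (simp add: divide_left_mono mult_left_mono frac_le)
  ultimately show ?thesis
    unfolding D_def by linarith
qed

lemma op_norm_Ktilde_le:
  assumes m: "0 < m" and \<mu>P: "0 < \<mu>P" "\<mu>P < m" and x: "x \<le> real n * m"
  shows "0 \<le> op_norm n (Ktilde m \<mu>P lam (complex_of_real x) n)
    \<and> op_norm n (Ktilde m \<mu>P lam (complex_of_real x) n)
      \<le> lam^2 * (2 * m / (m - \<mu>P)) / (sqrt (m * (real n * m - x)) + m)"
proof (rule op_norm_le)
  show "0 \<le> lam^2 * (2 * m / (m - \<mu>P)) / (sqrt (m * (real n * m - x)) + m)"
    using m \<mu>P x by simp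
  have "1 * (omega m p + (real n * m - x)) \<le> cmod (complex_of_real (Hn m n k + omega m p) - complex_of_real x)"
    if "\<forall>i<n. 0 < fst (k i)" "0 < fst p" for k p
    using K_denominator_ge[OF m that(1), of p "complex_of_real x"] by simp
  from Ktilde_bound[OF m \<mu>P _ zero_less_one this] x m
  show "l2norm n (Ktilde m \<mu>P lam (complex_of_real x) n \<psi>)
      \<le> lam^2 * (2 * m / (m - \<mu>P)) / (sqrt (m * (real n * m - x)) + m) * l2norm n \<psi>"
    if "\<psi> \<in> fock_sector n" for \<psi>
    using that by simp
qed

lemma op_norm_Ktilde_tendsto_zero:
  assumes m: "0 < m" and \<mu>P: "0 < \<mu>P" "\<mu>P < m"
  shows "((\<lambda>x::real. op_norm n (Ktilde m \<mu>P lam (complex_of_real x) n)) \<longlongrightarrow> 0) at_bot"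
proof (rule tendsto_sandwich)
  define B where "B x = lam^2 * (2 * m / (m - \<mu>P)) / (sqrt (m * (real n * m - x)) + m)" for x
  show "\<forall>\<^sub>F x in at_bot. 0 \<le> op_norm n (Ktilde m \<mu>P lam (complex_of_real x) n)"
    and "\<forall>\<^sub>F x in at_bot. op_norm n (Ktilde m \<mu>P lam (complex_of_real x) n) \<le> B x"
  proof -
    have "\<forall>\<^sub>F x in at_bot. 0 \<le> op_norm n (Ktilde m \<mu>P lam (complex_of_real x) n)
        \<and> op_norm n (Ktilde m \<mu>P lam (complex_of_real x) n) \<le> B x"
      using eventually_le_at_bot[of "real n * m"]
      by (rule eventually_mono) (unfold B_def, rule op_norm_Ktilde_le[OF m \<mu>P])
    then show "\<forall>\<^sub>F x in at_bot. 0 \<le> op_norm n (Ktilde m \<mu>P lam (complex_of_real x) n)"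
      and "\<forall>\<^sub>F x in at_bot. op_norm n (Ktilde m \<mu>P lam (complex_of_real x) n) \<le> B x"
      by (auto elim: eventually_mono)
  qed
  show "(B \<longlongrightarrow> 0) at_bot"
    unfolding B_def using m by real_asymp
qed simp

lemma op_norm_Utilde_tendsto_zero:
  assumes m: "0 < m" and \<mu>P: "\<mu>P < m"
  shows "((\<lambda>x::real. op_norm n (Utilde m \<mu>P lam (complex_of_real x) n)) \<longlongrightarrow> 0) at_bot"
proof (rule tendsto_sandwich)
  define B where "B x = lam^2 * real n / ((real n - 1) * m + \<mu>P - x)" for x
  show "\<forall>\<^sub>F x in at_bot. 0 \<le> op_norm n (Utilde m \<mu>P lam (complex_of_real x) n)"
    and "\<forall>\<^sub>F x in at_bot. op_norm n (Utilde m \<mu>P lam (complex_of_real x) n) \<le> B x"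
  proof -
    have "\<forall>\<^sub>F x in at_bot. 0 \<le> op_norm n (Utilde m \<mu>P lam (complex_of_real x) n)
        \<and> op_norm n (Utilde m \<mu>P lam (complex_of_real x) n) \<le> B x"
      unfolding eventually_at_bot_dense B_def
    proof (intro exI[of _ "(real n - 1) * m + \<mu>P"] allI impI)
      fix x :: real
      assume "x < (real n - 1) * m + \<mu>P"
      then show "0 \<le> op_norm n (Utilde m \<mu>P lam (complex_of_real x) n)
          \<and> op_norm n (Utilde m \<mu>P lam (complex_of_real x) n) \<le> lam^2 * real n / ((real n - 1) * m + \<mu>P - x)"
        using op_norm_Utilde_le[OF m \<mu>P, where E = "complex_of_real x" and lam = lam] by simp
    qed
    then show "\<forall>\<^sub>F x in at_bot. 0 \<le> op_norm n (Utilde m \<mu>P lam (complex_of_real x) n)"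
      and "\<forall>\<^sub>F x in at_bot. op_norm n (Utilde m \<mu>P lam (complex_of_real x) n) \<le> B x"
      by (auto elim: eventually_mono)
  qed
  show "(B \<longlongrightarrow> 0) at_bot"
    unfolding B_def by real_asymp
qed simp

theorem mainTheorem1:
  fixes m \<mu>P :: real
  assumes "0 < m" and "0 < \<mu>P" and "\<mu>P < m"
  shows
    "(\<forall>lam > 0. \<forall>n \<ge> 1. \<forall>E. Re E < real n * m + \<mu>P \<longrightarrow>
        (AE k in fock_measure n. integrable mom_measure (K_integrand m \<mu>P E n k))
      \<and> bounded_op n (Ktilde m \<mu>P lam E n)
      \<and> (\<forall>\<psi> \<in> fock_sector n. AE k in fock_measure n.
            \<forall>j < n. integrable mom_measure (U_integrand m \<mu>P E n \<psi> k j))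
      \<and> bounded_op n (Utilde m \<mu>P lam E n))
   \<and> (\<exists>C > 0. \<forall>lam > 0. \<forall>n \<ge> 1. \<forall>E. Re E < (real n - 1) * m + \<mu>P \<longrightarrow>
        op_norm n (Utilde m \<mu>P lam E n)
          \<le> C * lam^2 * real n / ((real n - 1) * m + \<mu>P - Re E))
   \<and> (\<forall>lam > 0. \<forall>n \<ge> 1.
        ((\<lambda>x::real. op_norm n (Ktilde m \<mu>P lam (complex_of_real x) n)) \<longlongrightarrow> 0) at_bot
      \<and> ((\<lambda>x::real. op_norm n (Utilde m \<mu>P lam (complex_of_real x) n)) \<longlongrightarrow> 0) at_bot)"
proof (intro conjI)
  show "\<forall>lam > 0. \<forall>n \<ge> 1. \<forall>E. Re E < real n * m + \<mu>P \<longrightarrow>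
        (AE k in fock_measure n. integrable mom_measure (K_integrand m \<mu>P E n k))
      \<and> bounded_op n (Ktilde m \<mu>P lam E n)
      \<and> (\<forall>\<psi> \<in> fock_sector n. AE k in fock_measure n.
            \<forall>j < n. integrable mom_measure (U_integrand m \<mu>P E n \<psi> k j))
      \<and> bounded_op n (Utilde m \<mu>P lam E n)"
    using Ktilde_bounded[OF assms] Utilde_bounded[OF assms] by blast
  show "\<exists>C > 0. \<forall>lam > 0. \<forall>n \<ge> 1. \<forall>E. Re E < (real n - 1) * m + \<mu>P \<longrightarrow>
        op_norm n (Utilde m \<mu>P lam E n) \<le> C * lam^2 * real n / ((real n - 1) * m + \<mu>P - Re E)"
    using op_norm_Utilde_le[OF assms(1,3)] by (intro exI[of _ 1]) auto
  show "\<forall>lam > 0. \<forall>n \<ge> 1.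
        ((\<lambda>x::real. op_norm n (Ktilde m \<mu>P lam (complex_of_real x) n)) \<longlongrightarrow> 0) at_bot
      \<and> ((\<lambda>x::real. op_norm n (Utilde m \<mu>P lam (complex_of_real x) n)) \<longlongrightarrow> 0) at_bot"
    using op_norm_Ktilde_tendsto_zero[OF assms] op_norm_Utilde_tendsto_zero[OF assms(1,3)] by blast
qed

end
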